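(* Let $G$ be a tree on node set $V$, $\lambda>0$, and let $T_1,\dots,T_\ell$ be independent complete traces of the cascade process with $p=1$ and rate $\lambda$ on $G$ (with arbitrary sources). If $\{u,v\}$ is not an edge of $G$ (with $u\ne v$), then Algorithm 1 sets $c(u,v)>\lambda^{-1}$ with probability at least $1-c_2\cdot c_3^{\ell}$, for some absolute constants $c_2<\infty$ and $c_3<1$.
   Context: Cascade process with $p=1$ and rate $\lambda$ from a source $s$: every edge receives an independent length drawn from $\mathrm{Exp}(\lambda)$; the infection time $t(v)$ is the shortest-path distance from $s$. A complete trace records the infection time of every node; $t_i(v)$ denotes the infection time of $v$ in trace $T_i$. Algorithm 1 (tree reconstruction): for every pair of nodes $u,v$, let $c(u,v)$ be the median of $\{|t_i(u)-t_i(v)|\}_{i=1}^{\ell}$; if there exist a node $q$ and traces $T_i,T_j$ with $t_i(q)<t_i(u)<t_i(v)$ and $t_j(q)<t_j(v)<t_j(u)$, set $c(u,v)=\infty$. Output the minimum spanning tree of the complete graph on $V$ with respect to the costs $c(u,v)$. *)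

theory Defs
  imports "HOL-Probability.Probability"
begin

definition is_path :: "'a set \<Rightarrow> 'a set set \<Rightarrow> 'a \<Rightarrow> 'a \<Rightarrow> 'a list \<Rightarrow> bool" where
  "is_path V E x y p \<longleftrightarrow> p \<noteq> [] \<and> hd p = x \<and> last p = y \<and> distinct p \<and> set p \<subseteq> V \<and>
     (\<forall>i. i + 1 < length p \<longrightarrow> {p ! i, p ! (i + 1)} \<in> E)"

definition is_tree :: "'a set \<Rightarrow> 'a set set \<Rightarrow> bool" where
  "is_tree V E \<longleftrightarrow> finite V \<and> V \<noteq> {} \<and>
     (\<forall>e\<in>E. \<exists>x y. e = {x, y} \<and> x \<noteq> y \<and> x \<in> V \<and> y \<in> V) \<and>
     (\<forall>x\<in>V. \<forall>y\<in>V. \<exists>!p. is_path V E x y p)"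

definition path_len :: "('a set \<Rightarrow> real) \<Rightarrow> 'a list \<Rightarrow> real" where
  "path_len w p = sum_list (map (\<lambda>(a, b). w {a, b}) (zip p (tl p)))"

text \<open>Infection time = shortest-path distance from the source s to v
  (the minimum is over simple paths, which suffices for nonnegative lengths).\<close>

definition infection_time :: "'a set \<Rightarrow> 'a set set \<Rightarrow> ('a set \<Rightarrow> real) \<Rightarrow> 'a \<Rightarrow> 'a \<Rightarrow> real" where
  "infection_time V E w s v = Inf {path_len w p | p. is_path V E s v p}"

definition median :: "real list \<Rightarrow> real" where
  "median xs = (let ys = sort xs; n = length xs in
     if even n then (ys ! (n div 2 - 1) + ys ! (n div 2)) / 2 else ys ! (n div 2))"

text \<open>Cost c(u,v) computed by Algorithm 1 from the traces t 0, ..., t (l-1)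
  (t i v = infection time of v in trace i).\<close>

definition alg_cost :: "'a set \<Rightarrow> (nat \<Rightarrow> 'a \<Rightarrow> real) \<Rightarrow> nat \<Rightarrow> 'a \<Rightarrow> 'a \<Rightarrow> ereal" where
  "alg_cost V t l u v =
     (if \<exists>q\<in>V. \<exists>i<l. \<exists>j<l. t i q < t i u \<and> t i u < t i v \<and> t j q < t j v \<and> t j v < t j u
      then \<infinity>
      else ereal (median (map (\<lambda>i. \<bar>t i u - t i v\<bar>) [0..<l])))"

text \<open>Probability space of l independent traces: in each trace every edge gets an
  independent Exp(lambda) length.\<close>

definition trace_space :: "'a set set \<Rightarrow> real \<Rightarrow> nat \<Rightarrow> (nat \<Rightarrow> 'a set \<Rightarrow> real) measure" where
  "trace_space E lam l =
     PiM {..<l} (\<lambda>_. PiM E (\<lambda>_. density lborel (exponential_density lam)))"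

end

theory Submission
  imports Defs
begin

text \<open>Let P = u ... v be the tree path between u and v; as u and v are not adjacent, it has K \<ge> 2
  edges. A source reaches P through an entry vertex P!j, and from there the infection times along P
  are sums of the lengths of path edges: t(v) - t(u) is the length of the edges after P!j minus the
  length of those before it. If Algorithm 1 does not set the cost to \<infinity>, the traces are oriented
  consistently by a cut c of P (u is infected first exactly in the traces entering at or before c);
  if moreover the median of |t(u) - t(v)| is at most 1/lam, at least half of the traces have a gap
  of size at most 1/lam with the orientation dictated by c. In a single trace this has probability
  at most p = max (1 - exp (-1/2)) ((1 - exp (-1))^2) < 1/2: for an inner entry vertex the gap is
  the difference of the two independent edge lengths next to it plus an independent shift, and
  such a difference lies in a fixed window of length 1/lam with probability at most 1 - exp (-1/2);
  for an end vertex the first two edges must both be shorter than 1/lam. A Chernoff bound over the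
  independent traces and a union bound over the at most l + 1 cuts bound the failure probability
  by (l + 1) (2 sqrt (p (1 - p)))^l.\<close>

section \<open>Paths in trees\<close>

lemma path_len_Cons_Cons: "path_len w (a # b # p) = w {a, b} + path_len w (b # p)"
  by (simp add: path_len_def)

lemma path_len_singleton [simp]: "path_len w [a] = 0"
  by (simp add: path_len_def)

lemma path_len_conv_sum: "path_len w p = (\<Sum>i<length p - 1. w {p!i, p!Suc i})"
  unfolding path_len_def sum_list_sum_nth by (rule sum.cong) (auto simp: nth_tl lessThan_atLeast0)

lemma path_len_append:
  "Q \<noteq> [] \<Longrightarrow> path_len w (Q @ R) = path_len w Q + path_len w (last Q # R)"
proof (induction Q rule: induct_list012)
  case (3 a b Q)
  then show ?case by (simp add: path_len_Cons_Cons)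
qed auto

lemma path_len_upt:
  "path_len w (map ((!) P) [j..<Suc (j + d)]) = (\<Sum>i\<in>{j..<j+d}. w {P!i, P!Suc i})"
proof (induction d arbitrary: j)
  case (Suc d)
  have "map ((!) P) [j..<Suc (j + Suc d)] = P!j # P!Suc j # map ((!) P) [Suc (Suc j)..<Suc (Suc j + d)]"
    by (simp add: upt_rec)
  moreover have "map ((!) P) [Suc j..<Suc (Suc j + d)] = P!Suc j # map ((!) P) [Suc (Suc j)..<Suc (Suc j + d)]"
    by (simp add: upt_rec)
  ultimately show ?case
    using Suc[of "Suc j"] by (simp add: path_len_Cons_Cons sum.atLeast_Suc_lessThan)
qed simp

lemma path_len_append_upt:
  assumes "Q \<noteq> []" "last Q = P!j" "j \<le> m"
  shows "path_len w (Q @ map ((!) P) [Suc j..<Suc m]) = path_len w Q + (\<Sum>i\<in>{j..<m}. w {P!i, P!Suc i})"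
proof -
  have "last Q # map ((!) P) [Suc j..<Suc m] = map ((!) P) [j..<Suc (j + (m - j))]"
    using assms by (simp add: upt_rec)
  then show ?thesis using path_len_append[OF assms(1), of w] path_len_upt[of w P j "m - j"] assms(3)
    by simp
qed

lemma is_path_edge: "is_path V E a b p \<Longrightarrow> i < length p - 1 \<Longrightarrow> {p!i, p!Suc i} \<in> E"
  unfolding is_path_def by auto

lemma is_path_rev: "is_path V E a b P \<Longrightarrow> is_path V E b a (rev P)"
  unfolding is_path_def
proof (intro conjI allI impI; (elim conjE)?)
  fix i assume *: "P \<noteq> []" "\<forall>i. i + 1 < length P \<longrightarrow> {P ! i, P ! (i + 1)} \<in> E" "i + 1 < length (rev P)"
  then have "{P ! (length P - Suc (Suc i)), P ! (length P - Suc (Suc i) + 1)} \<in> E" by auto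
  moreover have "length P - Suc (Suc i) + 1 = length P - Suc i" using *(3) by simp
  ultimately show "{rev P ! i, rev P ! (i + 1)} \<in> E" using *(3) by (simp add: rev_nth insert_commute)
qed (auto simp: hd_rev last_rev)

lemma is_path_append_upt:
  assumes P: "is_path V E a b P" and Q: "is_path V E s (P!j) Q"
    and disj: "\<forall>k<length Q - 1. Q!k \<notin> set P" and jm: "j \<le> m" "m < length P"
  shows "is_path V E s (P!m) (Q @ map ((!) P) [Suc j..<Suc m])"
proof -
  define R where "R = map ((!) P) [Suc j..<Suc m]"
  define L where "L = length Q"
  have Qne: "Q \<noteq> []" and hdQ: "hd Q = s" and lastQ: "last Q = P!j" and dQ: "distinct Q"
    and sQ: "set Q \<subseteq> V" and eQ: "\<And>i. i + 1 < length Q \<Longrightarrow> {Q ! i, Q ! (i + 1)} \<in> E"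
    using Q unfolding is_path_def by auto
  have dP: "distinct P" and sP: "set P \<subseteq> V" and eP: "\<And>i. i + 1 < length P \<Longrightarrow> {P ! i, P ! (i + 1)} \<in> E"
    using P unfolding is_path_def by auto
  have L1: "L \<ge> 1" using Qne L_def by (cases Q) auto
  have lenR: "length R = m - j" using jm by (auto simp: R_def)
  have nth_QR: "(Q @ R) ! (L - 1 + t) = P ! (j + t)" if "t \<le> m - j" for t
  proof (cases t)
    case 0
    then show ?thesis using L1 lastQ Qne by (simp add: L_def nth_append last_conv_nth)
  next
    case (Suc t')
    then have "L - 1 + t = L + t'" using L1 by simp
    then have "(Q @ R) ! (L - 1 + t) = R ! t'" by (simp add: nth_append L_def)
    also have "\<dots> = P ! (j + t)" unfolding R_def using that Suc jm by (subst nth_map_upt) auto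
    finally show ?thesis .
  qed
  have last: "last (Q @ R) = P!m"
  proof (cases "m = j")
    case False
    then have "R \<noteq> []" using jm by (simp add: R_def)
    then show ?thesis using jm False by (simp add: R_def last_map)
  qed (use lastQ in \<open>simp add: R_def\<close>)
  have setR: "set R \<subseteq> set P" using jm by (auto simp: R_def)
  have dR: "distinct R" unfolding R_def using dP jm
    by (auto simp: distinct_map inj_on_def nth_eq_iff_index_eq)
  have disjQR: "set Q \<inter> set R = {}"
  proof (rule ccontr)
    assume "set Q \<inter> set R \<noteq> {}"
    then obtain x where x: "x \<in> set Q" "x \<in> set R" by blast
    then obtain k where k: "k < length Q" "Q!k = x" by (metis in_set_conv_nth)
    obtain i where i: "Suc j \<le> i" "i < Suc m" "x = P!i" using x(2) by (auto simp: R_def)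
    show False
    proof (cases "k < length Q - 1")
      case True then show False using disj k x setR by blast
    next
      case False
      then have "k = length Q - 1" using k by simp
      then have "x = P!j" using lastQ Qne k by (simp add: last_conv_nth)
      then show False using i dP jm by (simp add: nth_eq_iff_index_eq)
    qed
  qed
  have edges: "{(Q @ R) ! i, (Q @ R) ! (i + 1)} \<in> E" if "i + 1 < length (Q @ R)" for i
  proof (cases "i + 1 < L")
    case True then show ?thesis using eQ by (simp add: nth_append L_def)
  next
    case False
    define t where "t = i - (L - 1)"
    have i_eq: "i = L - 1 + t" using False L1 by (simp add: t_def)
    have t_le: "t + 1 \<le> m - j" using that False lenR L1 by (simp add: t_def L_def)
    have "(Q @ R) ! i = P ! (j + t)" using nth_QR[of t] t_le i_eq by simp
    moreover have "(Q @ R) ! (i + 1) = P ! (j + t + 1)" using nth_QR[of "t+1"] t_le i_eq L1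
      by (simp add: add.assoc)
    moreover have "j + t + 1 < length P" using t_le jm by simp
    ultimately show ?thesis using eP by simp
  qed
  show ?thesis unfolding is_path_def R_def[symmetric]
    using Qne hdQ last dQ dR disjQR sQ setR sP edges by auto
qed

lemma tree_path_exists: "is_tree V E \<Longrightarrow> x \<in> V \<Longrightarrow> y \<in> V \<Longrightarrow> \<exists>p. is_path V E x y p"
  unfolding is_tree_def by (meson ex1_implies_ex)

lemma tree_path_unique:
  "is_tree V E \<Longrightarrow> x \<in> V \<Longrightarrow> y \<in> V \<Longrightarrow> is_path V E x y p \<Longrightarrow> is_path V E x y q \<Longrightarrow> p = q"
  unfolding is_tree_def by blast

lemma infection_time_tree_path:
  assumes "is_tree V E" "s \<in> V" "x \<in> V" "is_path V E s x p"
  shows "infection_time V E w s x = path_len w p"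
proof -
  have "{path_len w p | p. is_path V E s x p} = {path_len w p}"
    using tree_path_unique[OF assms(1-3)] assms(4) by blast
  thus ?thesis unfolding infection_time_def by simp
qed

lemma tree_path_to_path_avoiding:
  assumes "is_tree V E" "s \<in> V" "P \<noteq> []" "set P \<subseteq> V"
  shows "\<exists>j Q. j < length P \<and> is_path V E s (P!j) Q \<and> (\<forall>k<length Q - 1. Q!k \<notin> set P)"
proof -
  let ?R = "\<lambda>Q. \<exists>j<length P. is_path V E s (P!j) Q"
  have "P!0 \<in> V" using assms by auto
  then obtain Q0 where "is_path V E s (P!0) Q0" using tree_path_exists[OF assms(1,2)] by blast
  hence "?R Q0" using assms(3) by auto
  then obtain Q where RQ: "?R Q" and min: "\<And>Q'. ?R Q' \<Longrightarrow> length Q \<le> length Q'"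
    using ex_has_least_nat[of ?R Q0 length] by blast
  then obtain j where j: "j < length P" "is_path V E s (P!j) Q" by blast
  have "\<forall>k<length Q - 1. Q!k \<notin> set P"
  proof (intro allI impI notI)
    fix k assume k: "k < length Q - 1" "Q!k \<in> set P"
    then obtain j' where j': "j' < length P" "P!j' = Q!k" by (metis in_set_conv_nth)
    have "last (take (Suc k) Q) = Q!k" using k(1) by (simp add: take_Suc_conv_app_nth)
    then have "is_path V E s (P!j') (take (Suc k) Q)"
      using j(2) k(1) j'(2) unfolding is_path_def by (auto dest: in_set_takeD)
    hence "length Q \<le> length (take (Suc k) Q)" using min j'(1) by blast
    thus False using k(1) by simp
  qed
  thus ?thesis using j by blast
qed

lemma infection_time_along_path:
  assumes tree: "is_tree V E" and P: "is_path V E u v P" and s: "s \<in> V"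
  shows "\<exists>j Q. j < length P \<and>
    (\<forall>w m. j \<le> m \<longrightarrow> m < length P \<longrightarrow>
        infection_time V E w s (P!m) = path_len w Q + (\<Sum>i\<in>{j..<m}. w {P!i, P!Suc i})) \<and>
    (\<forall>w. infection_time V E w s u = path_len w Q + (\<Sum>i<j. w {P!i, P!Suc i}))"
proof -
  have Pne: "P \<noteq> []" and sP: "set P \<subseteq> V" and hdP: "hd P = u" using P unfolding is_path_def by auto
  obtain j Q where j: "j < length P" and Q: "is_path V E s (P!j) Q"
    and disj: "\<forall>k<length Q - 1. Q!k \<notin> set P"
    using tree_path_to_path_avoiding[OF tree s Pne sP] by blast
  have Qne: "Q \<noteq> []" and lastQ: "last Q = P!j" using Q unfolding is_path_def by auto
  have forward: "infection_time V E w s (P!m) = path_len w Q + (\<Sum>i\<in>{j..<m}. w {P!i, P!Suc i})"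
    if "j \<le> m" "m < length P" for w m
  proof -
    have "is_path V E s (P!m) (Q @ map ((!) P) [Suc j..<Suc m])"
      by (rule is_path_append_upt[OF P Q disj that])
    moreover have "P!m \<in> V" using sP that by auto
    ultimately show ?thesis
      using infection_time_tree_path[OF tree s] path_len_append_upt[OF Qne lastQ that(1)] by metis
  qed
  define K where "K = length P - 1"
  have lenP: "length P = Suc K" using Pne by (simp add: K_def)
  have rj: "P!j = rev P ! (K - j)" using j lenP by (simp add: rev_nth Suc_diff_le)
  have backward: "infection_time V E w s u = path_len w Q + (\<Sum>i<j. w {P!i, P!Suc i})" for w
  proof -
    have K1: "K - j \<le> K" "K < length (rev P)" using lenP by auto
    have "is_path V E s (rev P ! K) (Q @ map ((!) (rev P)) [Suc (K - j)..<Suc K])"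
      using is_path_append_upt[OF is_path_rev[OF P] _ _ K1] Q rj disj by simp
    moreover have "rev P ! K = u" using lenP hdP Pne by (simp add: rev_nth hd_conv_nth)
    ultimately have "is_path V E s u (Q @ map ((!) (rev P)) [Suc (K - j)..<Suc K])" by simp
    moreover have "u \<in> V" using P unfolding is_path_def by auto
    ultimately have "infection_time V E w s u = path_len w (Q @ map ((!) (rev P)) [Suc (K - j)..<Suc K])"
      using infection_time_tree_path[OF tree s] by blast
    also have "\<dots> = path_len w Q + (\<Sum>i\<in>{K - j..<K}. w {rev P!i, rev P!Suc i})"
      using path_len_append_upt[OF Qne _ K1(1)] lastQ rj by simp
    also have "(\<Sum>i\<in>{K - j..<K}. w {rev P!i, rev P!Suc i}) = (\<Sum>i<j. w {P!i, P!Suc i})"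
    proof (rule sum.reindex_bij_witness[of _ "\<lambda>r. K - 1 - r" "\<lambda>i. K - 1 - i"])
      fix a assume a: "a \<in> {K - j..<K}"
      show "K - 1 - (K - 1 - a) = a" "K - 1 - a \<in> {..<j}" using a by auto
      have "rev P ! a = P ! Suc (K - 1 - a)" "rev P ! Suc a = P ! (K - 1 - a)"
        using a j lenP by (auto simp: rev_nth Suc_diff_Suc)
      then show "w {P ! (K - 1 - a), P ! Suc (K - 1 - a)} = w {rev P ! a, rev P ! Suc a}"
        by (simp add: insert_commute)
    next
      fix b assume "b \<in> {..<j}"
      then show "K - 1 - (K - 1 - b) = b" "K - 1 - b \<in> {K - j..<K}" using j lenP by auto
    qed
    finally show ?thesis .
  qed
  show ?thesis using j forward backward by blast
qed

lemma nonadjacent_path_length: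
  assumes P: "is_path V E u v P" and "u \<noteq> v" "{u, v} \<notin> E"
  shows "3 \<le> length P"
proof (rule ccontr)
  assume short: "\<not> 3 \<le> length P"
  have ends: "P \<noteq> []" "P!0 = u" "P!(length P - 1) = v"
    using P unfolding is_path_def by (auto simp: hd_conv_nth last_conv_nth)
  then have "length P \<noteq> 0" by simp
  then consider "length P = 1" | "length P = 2" using short by linarith
  then show False
  proof cases
    case 1 then show False using ends assms(2) by simp
  next
    case 2 then show False using ends assms(3) is_path_edge[OF P, of 0] by simp
  qed
qed

lemma path_edges_inj:
  assumes "distinct P"
  shows "inj_on (\<lambda>r. {P!r, P!Suc r}) {..<length P - 1}"
proof (rule inj_onI)
  fix r r' assume r: "r \<in> {..<length P - 1}" "r' \<in> {..<length P - 1}"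
    and "{P!r, P!Suc r} = {P!r', P!Suc r'}"
  then have "(P!r = P!r' \<and> P!Suc r = P!Suc r') \<or> (P!r = P!Suc r' \<and> P!Suc r = P!r')"
    by (simp add: doubleton_eq_iff)
  then show "r = r'" using r assms by (auto simp: nth_eq_iff_index_eq)
qed

section \<open>Medians and consistent cuts\<close>

lemma sorted_nth_le_iff:
  "sorted ys \<Longrightarrow> k < length ys \<Longrightarrow> (ys ! k \<le> a) \<longleftrightarrow> k < length (filter (\<lambda>x. x \<le> a) ys)"
proof (induction ys arbitrary: k)
  case (Cons y ys)
  show ?case
  proof (cases "y \<le> a")
    case True
    then show ?thesis using Cons by (cases k) auto
  next
    case False
    have "filter (\<lambda>x. x \<le> a) (y # ys) = []" using False Cons.prems(1) by (auto simp: filter_empty_conv)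
    moreover have "(y # ys) ! k \<ge> y" using Cons.prems by (cases k) auto
    ultimately show ?thesis using False by auto
  qed
qed simp

lemma sort_nth_le_iff:
  fixes xs :: "real list"
  assumes "k < length xs"
  shows "(sort xs ! k \<le> a) \<longleftrightarrow> k < length (filter (\<lambda>x. x \<le> a) xs)"
proof -
  have "length (filter (\<lambda>x. x \<le> a) (sort xs)) = length (filter (\<lambda>x. x \<le> a) xs)"
    by (metis mset_filter mset_sort size_mset)
  then show ?thesis using sorted_nth_le_iff[of "sort xs" k a] assms by simp
qed

lemma median_le_imp_majority_le:
  fixes xs :: "real list"
  assumes "median xs \<le> h"
  shows "length xs \<le> 2 * length (filter (\<lambda>x. x \<le> h) xs)"
proof -
  define n where "n = length xs"
  show ?thesis
  proof (cases "n = 0")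
    case True then show ?thesis by (simp add: n_def)
  next
    case n0: False
    show ?thesis
    proof (cases "even n")
      case True
      have "sort xs ! (n div 2 - 1) \<le> sort xs ! (n div 2)"
        using n0 True by (intro sorted_nth_mono) (auto simp: n_def)
      then have "sort xs ! (n div 2 - 1) \<le> h"
        using assms True unfolding median_def Let_def n_def[symmetric] by simp
      moreover have "n div 2 - 1 < length xs" using n0 unfolding n_def by (cases xs) auto
      ultimately have "n div 2 - 1 < length (filter (\<lambda>x. x \<le> h) xs)"
        using sort_nth_le_iff[of "n div 2 - 1" xs h] by simp
      then show ?thesis using True n0 by (simp add: n_def[symmetric]) presburger
    next
      case False
      have "sort xs ! (n div 2) \<le> h"
        using assms False unfolding median_def Let_def n_def[symmetric] by simp
      moreover have "n div 2 < length xs" using n0 by (simp add: n_def)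
      ultimately have "n div 2 < length (filter (\<lambda>x. x \<le> h) xs)"
        using sort_nth_le_iff[of "n div 2" xs h] by simp
      then show ?thesis using False by (simp add: n_def[symmetric])
    qed
  qed
qed

text \<open>Trace i enters the path P = u ... v at vertex j i, so u is infected at time tu i, v at time tv i
  and P!m (for m \<ge> j i) at time T i m. The cut is the largest entry index of a trace in which u
  comes strictly first; the forbidden pattern is witnessed by q = P!c.\<close>

lemma consistent_cut_exists:
  fixes j :: "nat \<Rightarrow> nat" and K l :: nat and D :: "nat \<Rightarrow> real"
    and ew :: "nat \<Rightarrow> nat \<Rightarrow> real" and T :: "nat \<Rightarrow> nat \<Rightarrow> real"
  defines "tu \<equiv> \<lambda>i. D i + (\<Sum>r<j i. ew i r)"
  defines "tv \<equiv> \<lambda>i. D i + (\<Sum>r\<in>{j i..<K}. ew i r)"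
  assumes jK: "\<And>i. i < l \<Longrightarrow> j i \<le> K"
    and pos: "\<And>i r. i < l \<Longrightarrow> r < K \<Longrightarrow> 0 < ew i r"
    and T: "\<And>i m. i < l \<Longrightarrow> j i \<le> m \<Longrightarrow> m \<le> K \<Longrightarrow> T i m = D i + (\<Sum>r\<in>{j i..<m}. ew i r)"
    and no_separator: "\<And>a b m. a < l \<Longrightarrow> b < l \<Longrightarrow> m \<le> K \<Longrightarrow>
              \<not> (T a m < tu a \<and> tu a < tv a \<and> T b m < tv b \<and> tv b < tu b)"
  shows "\<exists>c \<in> insert 0 (j ` {..<l}). \<forall>i<l. (j i \<le> c \<longrightarrow> tu i \<le> tv i) \<and> (c < j i \<longrightarrow> tv i \<le> tu i)"
proof -
  define U where "U = {i. i < l \<and> tu i < tv i}"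
  define c where "c = Max (insert 0 (j ` U))"
  have finU: "finite U" by (simp add: U_def)
  have cmem: "c \<in> insert 0 (j ` U)" unfolding c_def using finU by (intro Max_in) auto
  have cge: "j i \<le> c" if "i \<in> U" for i unfolding c_def using finU that by (intro Max_ge) auto
  have sum_nonneg': "0 \<le> (\<Sum>r\<in>A. ew i r)" if "i < l" "A \<subseteq> {..<K}" for i A
    using pos[OF that(1)] that(2) by (intro sum_nonneg) (auto intro: less_imp_le)
  have j0: "tu i \<le> tv i" if "i < l" "j i = 0" for i
    using that sum_nonneg'[of i "{..<K}"] by (simp add: tu_def tv_def atLeast0LessThan)
  have jK': "tv i \<le> tu i" if "i < l" "j i = K" for i
    using that sum_nonneg'[of i "{..<K}"] by (simp add: tu_def tv_def)
  have "\<forall>i<l. (j i \<le> c \<longrightarrow> tu i \<le> tv i) \<and> (c < j i \<longrightarrow> tv i \<le> tu i)"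
  proof (intro allI impI conjI)
    fix i assume i: "i < l" "c < j i"
    then have "i \<notin> U" using cge by fastforce
    then show "tv i \<le> tu i" using i by (auto simp: U_def)
  next
    fix i assume i: "i < l" "j i \<le> c"
    show "tu i \<le> tv i"
    proof (rule ccontr)
      assume v_first: "\<not> tu i \<le> tv i"
      then have "j i \<noteq> 0" using j0 i(1) by blast
      then have "c \<noteq> 0" using i by simp
      then obtain a where a: "a \<in> U" "j a = c" using cmem by auto
      have al: "a < l" and ua: "tu a < tv a" using a by (auto simp: U_def)
      have jaK: "j a < K" using jK[OF al] jK'[OF al] ua by force
      have "(\<Sum>r<j a. ew a r) > 0"
        using a \<open>c \<noteq> 0\<close> jaK pos[OF al] by (intro sum_pos) (auto simp: lessThan_empty_iff)
      then have Ta: "T a (j a) < tu a" using T[OF al, of "j a"] jaK by (simp add: tu_def)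
      have split: "(\<Sum>r\<in>{j i..<K}. ew i r) = (\<Sum>r\<in>{j i..<j a}. ew i r) + (\<Sum>r\<in>{j a..<K}. ew i r)"
        using i a jaK by (intro sum.atLeastLessThan_concat[symmetric]) auto
      have "(\<Sum>r\<in>{j a..<K}. ew i r) > 0" using jaK pos[OF i(1)] by (intro sum_pos) auto
      then have Ti: "T i (j a) < tv i" using T[OF i(1), of "j a"] i a jaK split by (simp add: tv_def)
      show False using no_separator[OF al i(1), of "j a"] Ta ua Ti v_first jaK by simp
    qed
  qed
  moreover have "c \<in> insert 0 (j ` {..<l})" using cmem by (auto simp: U_def)
  ultimately show ?thesis by blast
qed

section \<open>Exponential edge lengths\<close>

abbreviation exp_dist :: "real \<Rightarrow> real measure" where
  "exp_dist lam \<equiv> density lborel (exponential_density lam)"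

lemma emeasure_exp_dist_Icc:
  assumes lam: "0 < lam" and a: "0 \<le> a" "a \<le> b"
  shows "emeasure (exp_dist lam) {a..b} = ennreal (exp (- lam * a) - exp (- lam * b))"
proof -
  have "emeasure (exp_dist lam) {a..b} = (\<integral>\<^sup>+ x. ennreal (exponential_density lam x) * indicator {a..b} x \<partial>lborel)"
    by (subst emeasure_density) auto
  also have "\<dots> = ennreal ((\<lambda>x. - exp (- lam * x)) b - (\<lambda>x. - exp (- lam * x)) a)"
  proof (rule nn_integral_FTC_Icc)
    show "exponential_density lam \<in> borel_measurable borel" by simp
    fix x assume x: "x \<in> {a..b}"
    have "((\<lambda>x. - exp (- lam * x)) has_real_derivative (exp (- lam * x) * lam)) (at x)"
      by (auto intro!: derivative_eq_intros)
    then show "((\<lambda>x. - exp (- lam * x)) has_real_derivative exponential_density lam x) (at x)"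
      using x a by (simp add: exponential_density_def mult.commute mult.left_commute)
    show "0 \<le> exponential_density lam x" using lam by (rule exponential_density_nonneg)
  qed (use a in auto)
  finally show ?thesis by simp
qed

lemma emeasure_exp_dist_atMost:
  assumes lam: "0 < lam" and a: "0 \<le> a"
  shows "emeasure (exp_dist lam) {..a} = ennreal (1 - exp (- lam * a))"
  using emeasure_erlang_density[OF lam, of 0 a] a by (simp add: erlang_CDF_0)

lemma AE_exp_dist_pos: "0 < lam \<Longrightarrow> AE x in exp_dist lam. 0 < x"
  by (rule AE_I'[of "{..0}"]) (auto simp: null_sets_def emeasure_exp_dist_atMost)

text \<open>The integral of the density against the survival function is P(X \<le> X') = 1/2 for i.i.d. X, X'.\<close>

lemma nn_integral_exp_dist_survival:
  assumes lam: "0 < lam"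
  shows "(\<integral>\<^sup>+ x. ennreal (exponential_density lam x) * ennreal (exp (- lam * x)) \<partial>lborel) = ennreal (1/2)"
proof -
  have "(\<integral>\<^sup>+ x. ennreal (exponential_density lam x) * ennreal (exp (- lam * x)) \<partial>lborel)
      = (\<integral>\<^sup>+ x. ennreal (1/2) * ennreal (exponential_density (2*lam) x) \<partial>lborel)"
  proof (rule nn_integral_cong)
    fix x :: real
    have eq: "exponential_density lam x * exp (- lam * x) = 1/2 * exponential_density (2*lam) x"
      by (simp add: exponential_density_def exp_add[symmetric] algebra_simps)
    have e1: "ennreal (exponential_density lam x) * ennreal (exp (- lam * x))
        = ennreal (exponential_density lam x * exp (- lam * x))"
      by (rule ennreal_mult[symmetric]) (use lam in \<open>auto simp: exponential_density_nonneg\<close>)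
    have e2: "ennreal (1/2) * ennreal (exponential_density (2*lam) x)
        = ennreal (1/2 * exponential_density (2*lam) x)"
      by (rule ennreal_mult[symmetric]) (use lam in \<open>auto simp: exponential_density_nonneg\<close>)
    show "ennreal (exponential_density lam x) * ennreal (exp (- lam * x))
      = ennreal (1/2) * ennreal (exponential_density (2*lam) x)"
      by (simp only: e1 e2 eq)
  qed
  also have "\<dots> = ennreal (1/2) * (\<integral>\<^sup>+ x. ennreal (exponential_density (2*lam) x) \<partial>lborel)"
    by (rule nn_integral_cmult) simp
  also have "(\<integral>\<^sup>+ x. ennreal (exponential_density (2*lam) x) \<partial>lborel) = 1"
  proof -
    interpret prob_space "exp_dist (2*lam)" using lam by (intro prob_space_exponential_density) simp
    show ?thesis using emeasure_space_1 by (subst (asm) emeasure_density) auto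
  qed
  finally show ?thesis by simp
qed

lemma exp_dist_diff_window_le:
  assumes lam: "0 < lam" and c: "0 \<le> c" and t: "0 \<le> t"
  shows "(\<integral>\<^sup>+ y. (\<integral>\<^sup>+ y'. (if c \<le> y' - y \<and> y' - y \<le> c + t then 1 else 0) \<partial>exp_dist lam) \<partial>exp_dist lam)
         \<le> ennreal ((1 - exp (- lam * t)) / 2)"
proof -
  interpret X: prob_space "exp_dist lam" using lam by (rule prob_space_exponential_density)
  have inner: "(\<integral>\<^sup>+ y'. (if c \<le> y' - y \<and> y' - y \<le> c + t then 1 else 0) \<partial>exp_dist lam)
      = emeasure (exp_dist lam) {y+c..y+c+t}" for y
  proof -
    have "(\<integral>\<^sup>+ y'. (if c \<le> y' - y \<and> y' - y \<le> c + t then 1 else 0) \<partial>exp_dist lam)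
        = (\<integral>\<^sup>+ y'. indicator {y+c..y+c+t} y' \<partial>exp_dist lam)"
      by (intro nn_integral_cong) (auto simp: indicator_def)
    then show ?thesis by simp
  qed
  have bound: "ennreal (exponential_density lam y) * emeasure (exp_dist lam) {y+c..y+c+t}
      \<le> ennreal (exponential_density lam y) * ennreal (exp (- lam * y)) * ennreal (1 - exp (- lam * t))" for y
  proof (cases "y < 0")
    case True then show ?thesis by (simp add: exponential_density_def)
  next
    case False
    have "emeasure (exp_dist lam) {y+c..y+c+t} = ennreal (exp (- lam * (y+c)) - exp (- lam * (y+c+t)))"
      using False c t lam by (intro emeasure_exp_dist_Icc) auto
    also have "\<dots> \<le> ennreal (exp (- lam * y) * (1 - exp (- lam * t)))"
    proof (rule ennreal_leI)
      have "exp (- lam * (y+c)) - exp (- lam * (y+c+t)) = exp (- lam * (y+c)) * (1 - exp (- lam * t))"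
        by (simp add: algebra_simps exp_add[symmetric])
      also have "\<dots> \<le> exp (- lam * y) * (1 - exp (- lam * t))"
        using lam c t by (intro mult_right_mono) auto
      finally show "exp (- lam * (y+c)) - exp (- lam * (y+c+t)) \<le> exp (- lam * y) * (1 - exp (- lam * t))" .
    qed
    finally show ?thesis
      using lam t by (simp add: ennreal_mult mult.assoc mult_left_mono)
  qed
  have meas: "(\<lambda>y. \<integral>\<^sup>+ y'. (if c \<le> y' - y \<and> y' - y \<le> c + t then 1 else 0) \<partial>exp_dist lam)
      \<in> borel_measurable lborel"
    by measurable
  have "(\<integral>\<^sup>+ y. (\<integral>\<^sup>+ y'. (if c \<le> y' - y \<and> y' - y \<le> c + t then 1 else 0) \<partial>exp_dist lam) \<partial>exp_dist lam)
      = (\<integral>\<^sup>+ y. ennreal (exponential_density lam y) * emeasure (exp_dist lam) {y+c..y+c+t} \<partial>lborel)"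
    by (subst nn_integral_density[OF _ meas]) (auto simp: inner)
  also have "\<dots> \<le> (\<integral>\<^sup>+ y. ennreal (exponential_density lam y) * ennreal (exp (- lam * y))
      * ennreal (1 - exp (- lam * t)) \<partial>lborel)"
    by (intro nn_integral_mono bound)
  also have "\<dots> = (\<integral>\<^sup>+ y. ennreal (exponential_density lam y) * ennreal (exp (- lam * y)) \<partial>lborel)
      * ennreal (1 - exp (- lam * t))"
    by (rule nn_integral_multc) simp
  also have "\<dots> = ennreal (1/2) * ennreal (1 - exp (- lam * t))"
    by (simp only: nn_integral_exp_dist_survival[OF lam])
  also have "\<dots> = ennreal ((1 - exp (- lam * t)) / 2)"
    by (subst ennreal_mult[symmetric]) (use lam t in auto)
  finally show ?thesis .
qed

text \<open>AM-GM: exp (-(s + 1)) + exp s \<ge> 2 exp (-1/2).\<close>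

lemma exp_window_split_le: "(1 - exp (- (s + 1))) / 2 + (1 - exp s) / 2 \<le> 1 - exp (-1/2::real)"
proof -
  define a where "a = exp ((- s - 1) / 2)"
  define b where "b = exp (s / 2)"
  have e1: "exp (- (s + 1)) = a * a" by (simp add: a_def exp_add[symmetric])
  have e2: "exp s = b * b" by (simp add: b_def exp_add[symmetric])
  have e3: "exp (-1/2) = a * b" by (simp add: a_def b_def exp_add[symmetric] field_simps)
  have "0 \<le> (a - b)^2" by simp
  then have "0 \<le> a*a - 2*(a*b) + b*b" by (simp add: power2_eq_square algebra_simps)
  then show ?thesis unfolding e1 e2 e3 by (simp add: field_simps)
qed

text \<open>The worst window is centred at 0; a window containing 0 is split there into two one-sided ones.\<close>

lemma exp_dist_diff_inv_rate_window_le: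
  assumes lam: "0 < lam"
  shows "(\<integral>\<^sup>+ y'. (\<integral>\<^sup>+ y. (if c \<le> y' - y \<and> y' - y \<le> c + 1/lam then 1 else 0) \<partial>exp_dist lam) \<partial>exp_dist lam)
         \<le> ennreal (1 - exp (-1/2))"
proof -
  interpret X: prob_space "exp_dist lam" using lam by (rule prob_space_exponential_density)
  interpret P: pair_sigma_finite "exp_dist lam" "exp_dist lam"
    by (simp add: pair_sigma_finite_def X.sigma_finite_measure_axioms)
  have swap: "(\<integral>\<^sup>+ y'. (\<integral>\<^sup>+ y. (if a \<le> y' - y \<and> y' - y \<le> a + t then 1 else 0) \<partial>exp_dist lam) \<partial>exp_dist lam)
    = (\<integral>\<^sup>+ y. (\<integral>\<^sup>+ y'. (if a \<le> y' - y \<and> y' - y \<le> a + t then 1 else 0) \<partial>exp_dist lam) \<partial>exp_dist lam)" for a t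
    by (rule P.Fubini'[where f="\<lambda>y y'. (if a \<le> y' - y \<and> y' - y \<le> a + t then 1 else 0)"]) measurable
  have one_side: "ennreal ((1 - exp (- lam * (1/lam))) / 2) \<le> ennreal (1 - exp (-1/2))"
    using exp_window_split_le[of 0] lam by (intro ennreal_leI) simp
  consider "0 \<le> c" | "c + 1/lam \<le> 0" | "c < 0" "0 < c + 1/lam" by linarith
  then show ?thesis
  proof cases
    case 1
    have "(\<integral>\<^sup>+ y'. (\<integral>\<^sup>+ y. (if c \<le> y' - y \<and> y' - y \<le> c + 1/lam then 1 else 0) \<partial>exp_dist lam) \<partial>exp_dist lam)
       \<le> ennreal ((1 - exp (- lam * (1/lam))) / 2)"
      unfolding swap using lam 1 by (intro exp_dist_diff_window_le) auto
    then show ?thesis using one_side by order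
  next
    case 2
    define c' where "c' = - c - 1/lam"
    have "(\<integral>\<^sup>+ y'. (\<integral>\<^sup>+ y. (if c \<le> y' - y \<and> y' - y \<le> c + 1/lam then 1 else 0) \<partial>exp_dist lam) \<partial>exp_dist lam)
       = (\<integral>\<^sup>+ y'. (\<integral>\<^sup>+ y. (if c' \<le> y - y' \<and> y - y' \<le> c' + 1/lam then 1 else 0) \<partial>exp_dist lam) \<partial>exp_dist lam)"
      by (intro nn_integral_cong) (auto simp: c'_def)
    also have "\<dots> \<le> ennreal ((1 - exp (- lam * (1/lam))) / 2)"
      using lam 2 by (intro exp_dist_diff_window_le) (auto simp: c'_def)
    finally show ?thesis using one_side by order
  next
    case 3
    have cl1: "-1 < lam * c" using 3 lam by (simp add: field_simps)
    have cl2: "lam * c < 0" using 3 lam by (simp add: mult_pos_neg)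
    let ?A = "\<lambda>y' y. (if 0 \<le> y' - y \<and> y' - y \<le> 0 + (c + 1/lam) then 1 else 0) :: ennreal"
    let ?B = "\<lambda>y' y. (if 0 \<le> y - y' \<and> y - y' \<le> 0 + (- c) then 1 else 0) :: ennreal"
    have "(\<integral>\<^sup>+ y'. (\<integral>\<^sup>+ y. (if c \<le> y' - y \<and> y' - y \<le> c + 1/lam then 1 else 0) \<partial>exp_dist lam) \<partial>exp_dist lam)
       \<le> (\<integral>\<^sup>+ y'. (\<integral>\<^sup>+ y. ?A y' y + ?B y' y \<partial>exp_dist lam) \<partial>exp_dist lam)"
      by (intro nn_integral_mono) auto
    also have "\<dots> = (\<integral>\<^sup>+ y'. (\<integral>\<^sup>+ y. ?A y' y \<partial>exp_dist lam) + (\<integral>\<^sup>+ y. ?B y' y \<partial>exp_dist lam) \<partial>exp_dist lam)"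
      by (intro nn_integral_cong nn_integral_add) auto
    also have "\<dots> = (\<integral>\<^sup>+ y'. (\<integral>\<^sup>+ y. ?A y' y \<partial>exp_dist lam) \<partial>exp_dist lam)
        + (\<integral>\<^sup>+ y'. (\<integral>\<^sup>+ y. ?B y' y \<partial>exp_dist lam) \<partial>exp_dist lam)"
      by (intro nn_integral_add) measurable
    also have "\<dots> \<le> ennreal ((1 - exp (- lam * (c + 1/lam))) / 2) + ennreal ((1 - exp (- lam * (- c))) / 2)"
    proof (intro add_mono)
      show "(\<integral>\<^sup>+ y'. (\<integral>\<^sup>+ y. ?A y' y \<partial>exp_dist lam) \<partial>exp_dist lam) \<le> ennreal ((1 - exp (- lam * (c + 1/lam))) / 2)"
        unfolding swap using lam 3 by (intro exp_dist_diff_window_le) auto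
      show "(\<integral>\<^sup>+ y'. (\<integral>\<^sup>+ y. ?B y' y \<partial>exp_dist lam) \<partial>exp_dist lam) \<le> ennreal ((1 - exp (- lam * (- c))) / 2)"
        using lam 3 by (intro exp_dist_diff_window_le) auto
    qed
    also have "\<dots> = ennreal ((1 - exp (- (lam * c + 1))) / 2 + (1 - exp (lam * c)) / 2)"
      using cl1 cl2 lam by (subst ennreal_plus[symmetric]) (auto simp: algebra_simps)
    also have "\<dots> \<le> ennreal (1 - exp (-1/2))"
      by (intro ennreal_leI exp_window_split_le)
    finally show ?thesis .
  qed
qed

lemma measurable_component_exp_dist:
  "i \<in> I \<Longrightarrow> (\<lambda>x. x i) \<in> borel_measurable (PiM I (\<lambda>_. exp_dist lam))"
  using measurable_component_singleton[of i I "\<lambda>_. exp_dist lam"]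
  by (simp add: measurable_cong_sets[OF refl sets_density])

lemma emeasure_PiM_diff_window_le:
  fixes E :: "'e set" and a b :: 'e and g :: "('e \<Rightarrow> real) \<Rightarrow> real"
  assumes lam: "0 < lam" and fin: "finite E" and ab: "a \<in> E" "b \<in> E" "a \<noteq> b"
    and g[measurable]: "g \<in> borel_measurable (PiM E (\<lambda>_. exp_dist lam))"
    and g_indep: "\<And>w w'. (\<And>e. e \<noteq> a \<Longrightarrow> e \<noteq> b \<Longrightarrow> w e = w' e) \<Longrightarrow> g w = g w'"
  shows "emeasure (PiM E (\<lambda>_. exp_dist lam))
      {w \<in> space (PiM E (\<lambda>_. exp_dist lam)). g w \<le> w b - w a \<and> w b - w a \<le> g w + 1/lam}
    \<le> ennreal (1 - exp (-1/2))"
proof -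
  let ?M = "\<lambda>_::'e. exp_dist lam"
  interpret X: prob_space "exp_dist lam" using lam by (rule prob_space_exponential_density)
  interpret PS: product_prob_space ?M E by unfold_locales
  define I where "I = E - {a,b}"
  define J where "J = {a,b}"
  have IJ: "I \<inter> J = {}" "I \<union> J = E" "finite I" "finite J"
    using ab fin by (auto simp: I_def J_def)
  interpret FJ: finite_product_sigma_finite ?M J by unfold_locales (rule IJ)
  interpret FI: prob_space "PiM I ?M" by (rule prob_space_PiM) (rule X.prob_space_axioms)
  define F where "F = {w \<in> space (PiM E ?M). g w \<le> w b - w a \<and> w b - w a \<le> g w + 1/lam}"
  have "(\<lambda>w. w b - w a - g w) \<in> borel_measurable (PiM E ?M)"
    using ab by (intro borel_measurable_diff g measurable_component_exp_dist)
  moreover have "F = (\<lambda>w. w b - w a - g w) -` {0..1/lam} \<inter> space (PiM E ?M)"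
    by (auto simp: F_def)
  ultimately have F: "F \<in> sets (PiM E ?M)" by simp
  have merge: "merge I J \<in> measurable (PiM I ?M \<Otimes>\<^sub>M PiM J ?M) (PiM E ?M)"
    using measurable_merge[of I J ?M] IJ(2) by simp
  have "emeasure (PiM E ?M) F = emeasure (distr (PiM I ?M \<Otimes>\<^sub>M PiM J ?M) (PiM E ?M) (merge I J)) F"
    using PS.distr_merge[OF IJ(1) IJ(3) IJ(4)] IJ(2) by simp
  also have "\<dots> = emeasure (PiM I ?M \<Otimes>\<^sub>M PiM J ?M) (merge I J -` F \<inter> space (PiM I ?M \<Otimes>\<^sub>M PiM J ?M))"
    by (rule emeasure_distr[OF merge F])
  also have "\<dots> = (\<integral>\<^sup>+ z. emeasure (PiM J ?M) (Pair z -` (merge I J -` F \<inter> space (PiM I ?M \<Otimes>\<^sub>M PiM J ?M))) \<partial>PiM I ?M)"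
    by (rule FJ.emeasure_pair_measure_alt) (rule measurable_sets[OF merge F])
  also have "\<dots> \<le> (\<integral>\<^sup>+ z. ennreal (1 - exp (-1/2)) \<partial>PiM I ?M)"
  proof (rule nn_integral_mono)
    fix z assume z: "z \<in> space (PiM I ?M)"
    text \<open>Once the coordinates outside {a, b} are fixed, the window is fixed.\<close>
    define c where "c = g (merge I J (z, \<lambda>_. 0))"
    have gc: "g (merge I J (z, x)) = c" for x
      unfolding c_def by (rule g_indep) (auto simp: merge_def J_def)
    have slice: "Pair z -` (merge I J -` F \<inter> space (PiM I ?M \<Otimes>\<^sub>M PiM J ?M))
        = {x \<in> space (PiM J ?M). c \<le> x b - x a \<and> x b - x a \<le> c + 1/lam}"
    proof -
      have "merge I J (z, x) \<in> space (PiM E ?M)" if "x \<in> space (PiM J ?M)" for x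
        using measurable_space[OF merge, of "(z,x)"] z that by (simp add: space_pair_measure)
      moreover have "merge I J (z, x) a = x a" "merge I J (z, x) b = x b" for x
        using IJ(1) by (auto simp: merge_def J_def)
      ultimately show ?thesis using z gc
        by (auto simp: F_def space_pair_measure)
    qed
    have Jab: "J = insert a {b}" by (simp add: J_def)
    have [measurable]: "(\<lambda>x. x a) \<in> borel_measurable (PiM J ?M)" "(\<lambda>x. x b) \<in> borel_measurable (PiM J ?M)"
      by (auto intro: measurable_component_exp_dist simp: J_def)
    have "emeasure (PiM J ?M) {x \<in> space (PiM J ?M). c \<le> x b - x a \<and> x b - x a \<le> c + 1/lam}
        = (\<integral>\<^sup>+ x. (if c \<le> x b - x a \<and> x b - x a \<le> c + 1/lam then 1 else 0) \<partial>PiM J ?M)"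
    proof -
      have S: "{x \<in> space (PiM J ?M). c \<le> x b - x a \<and> x b - x a \<le> c + 1/lam} \<in> sets (PiM J ?M)"
        by measurable
      have "(\<integral>\<^sup>+ x. (if c \<le> x b - x a \<and> x b - x a \<le> c + 1/lam then 1 else 0) \<partial>PiM J ?M)
          = (\<integral>\<^sup>+ x. indicator {x \<in> space (PiM J ?M). c \<le> x b - x a \<and> x b - x a \<le> c + 1/lam} x \<partial>PiM J ?M)"
        by (intro nn_integral_cong) (auto simp: indicator_def)
      then show ?thesis using S by simp
    qed
    also have "\<dots> = (\<integral>\<^sup>+ x. (\<integral>\<^sup>+ y. (if c \<le> (x(a := y)) b - (x(a := y)) a \<and> (x(a := y)) b - (x(a := y)) a \<le> c + 1/lam
        then 1 else 0) \<partial>exp_dist lam) \<partial>PiM {b} ?M)"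
    proof -
      have "(\<lambda>x. (if c \<le> x b - x a \<and> x b - x a \<le> c + 1/lam then 1 else 0) :: ennreal)
          \<in> borel_measurable (PiM (insert a {b}) ?M)"
        unfolding Jab[symmetric] by measurable
      then show ?thesis using PS.product_nn_integral_insert[of "{b}" a] ab(3) Jab by simp
    qed
    also have "\<dots> = (\<integral>\<^sup>+ x. (\<integral>\<^sup>+ y. (if c \<le> x b - y \<and> x b - y \<le> c + 1/lam then 1 else 0) \<partial>exp_dist lam) \<partial>PiM {b} ?M)"
      using ab(3) by simp
    also have "\<dots> = (\<integral>\<^sup>+ y'. (\<integral>\<^sup>+ y. (if c \<le> y' - y \<and> y' - y \<le> c + 1/lam then 1 else 0) \<partial>exp_dist lam) \<partial>exp_dist lam)"
      by (rule PS.product_nn_integral_singleton) measurable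
    also have "\<dots> \<le> ennreal (1 - exp (-1/2))" by (rule exp_dist_diff_inv_rate_window_le[OF lam])
    finally show "emeasure (PiM J ?M) (Pair z -` (merge I J -` F \<inter> space (PiM I ?M \<Otimes>\<^sub>M PiM J ?M)))
        \<le> ennreal (1 - exp (-1/2))"
      unfolding slice .
  qed
  also have "\<dots> = ennreal (1 - exp (-1/2))"
    by (simp add: FI.emeasure_space_1)
  finally show ?thesis unfolding F_def .
qed

lemma emeasure_PiM_both_le_inv_rate:
  fixes E :: "'e set"
  assumes lam: "0 < lam" and ab: "a \<in> E" "b \<in> E" "a \<noteq> b"
  shows "emeasure (PiM E (\<lambda>_. exp_dist lam))
      {w \<in> space (PiM E (\<lambda>_. exp_dist lam)). w a \<le> 1/lam \<and> w b \<le> 1/lam} = ennreal ((1 - exp (-1))^2)"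
proof -
  let ?M = "\<lambda>_::'e. exp_dist lam"
  interpret X: prob_space "exp_dist lam" using lam by (rule prob_space_exponential_density)
  interpret PS: product_prob_space ?M E by unfold_locales
  have "{w \<in> space (PiM E ?M). w a \<le> 1/lam \<and> w b \<le> 1/lam}
      = {w \<in> space (PiM E ?M). \<forall>i\<in>{a,b}. w i \<in> {..1/lam}}"
    by auto
  also have "emeasure (PiM E ?M) \<dots> = (\<Prod>i\<in>{a,b}. emeasure (exp_dist lam) {..1/lam})"
    using ab by (intro PS.emeasure_PiM_Collect) auto
  also have "\<dots> = ennreal ((1 - exp (-1))^2)"
    using ab lam by (simp add: emeasure_exp_dist_atMost ennreal_mult[symmetric] power2_eq_square)
  finally show ?thesis .
qed

section \<open>Close gaps in a single trace\<close>

text \<open>Edge weights w on the path edges e 0, ..., e (K - 1) from u to v: if the source enters the path at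
  index j, then path_time_gap e K j w is the infection time of v minus that of u.\<close>

definition path_time_gap :: "(nat \<Rightarrow> 'e) \<Rightarrow> nat \<Rightarrow> nat \<Rightarrow> ('e \<Rightarrow> real) \<Rightarrow> real" where
  "path_time_gap e K j w = (\<Sum>r\<in>{j..<K}. w (e r)) - (\<Sum>r<j. w (e r))"

definition close_gap_event :: "real \<Rightarrow> 'e set \<Rightarrow> (nat \<Rightarrow> 'e) \<Rightarrow> nat \<Rightarrow> nat \<Rightarrow> bool \<Rightarrow> ('e \<Rightarrow> real) set" where
  "close_gap_event lam E e K j u_first = {w \<in> space (PiM E (\<lambda>_. exp_dist lam)). (\<forall>r<K. 0 < w (e r)) \<and>
     (if u_first then 0 \<le> path_time_gap e K j w \<and> path_time_gap e K j w \<le> 1/lam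
      else -(1/lam) \<le> path_time_gap e K j w \<and> path_time_gap e K j w \<le> 0)}"

definition close_gap_bound :: real where
  "close_gap_bound = max (1 - exp (-1/2)) ((1 - exp (-1))^2)"

lemma close_gap_bound_pos: "0 < close_gap_bound"
  unfolding close_gap_bound_def by (simp add: less_max_iff_disj)

lemma close_gap_bound_less_half: "close_gap_bound < 1/2"
proof -
  have e: "exp (1::real) < 272/100" by (rule e_less_272)
  have "exp (1/2::real) * exp (1/2) = exp 1" by (simp add: exp_add[symmetric])
  then have "exp (1/2::real) < 2"
    using e mult_mono[of 2 "exp (1/2::real)" 2 "exp (1/2)"] by force
  then have "1 - exp (-1/2::real) < 1/2" by (simp add: exp_minus field_simps)
  moreover have "exp (-1::real) > 100/272" using e by (simp add: exp_minus field_simps)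
  then have "(1 - exp (-1::real))^2 < (172/272)^2"
    by (intro power_strict_mono) auto
  then have "(1 - exp (-1::real))^2 < 1/2" by (simp add: power2_eq_square)
  ultimately show ?thesis unfolding close_gap_bound_def max_less_iff_conj by blast
qed

lemma measurable_sum_path_weights:
  assumes "\<And>r. r \<in> S \<Longrightarrow> e r \<in> E"
  shows "(\<lambda>w::'e\<Rightarrow>real. \<Sum>r\<in>S. w (e r)) \<in> borel_measurable (PiM E (\<lambda>_. exp_dist lam))"
  using assms by (intro borel_measurable_sum measurable_component_exp_dist) auto

lemma close_gap_event_sets:
  assumes eE: "\<And>r. r < K \<Longrightarrow> e r \<in> E" and j: "j \<le> K"
  shows "close_gap_event lam E e K j u_first \<in> sets (PiM E (\<lambda>_. exp_dist lam))"
proof -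
  let ?M = "PiM E (\<lambda>_. exp_dist lam)"
  have [measurable]: "path_time_gap e K j \<in> borel_measurable ?M"
    unfolding path_time_gap_def[abs_def] using eE j
    by (intro borel_measurable_diff measurable_sum_path_weights) auto
  have [measurable]: "{w\<in>space ?M. \<forall>r\<in>{..<K}. 0 < w (e r)} \<in> sets ?M"
  proof (rule sets.sets_Collect_countable_All')
    fix r assume "r \<in> {..<K}"
    then have [measurable]: "(\<lambda>w. w (e r)) \<in> borel_measurable ?M"
      using eE by (intro measurable_component_exp_dist) auto
    show "{w \<in> space ?M. 0 < w (e r)} \<in> sets ?M" by measurable
  qed simp
  have "close_gap_event lam E e K j u_first = {w\<in>space ?M. \<forall>r\<in>{..<K}. 0 < w (e r)} \<inter>
      {w\<in>space ?M. if u_first then 0 \<le> path_time_gap e K j w \<and> path_time_gap e K j w \<le> 1/lam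
                   else -(1/lam) \<le> path_time_gap e K j w \<and> path_time_gap e K j w \<le> 0}"
    by (auto simp: close_gap_event_def)
  also have "\<dots> \<in> sets ?M" by measurable
  finally show ?thesis .
qed

text \<open>If the source enters the path at an end vertex, a close gap forces the whole path, and in
  particular its first two edges, to be shorter than 1/lam.\<close>

lemma emeasure_close_gap_event_end_le:
  assumes lam: "0 < lam" and eE: "\<And>r. r < K \<Longrightarrow> e r \<in> E"
    and inj: "inj_on e {..<K}" and K2: "2 \<le> K" and j: "j = 0 \<or> j = K"
  shows "emeasure (PiM E (\<lambda>_. exp_dist lam)) (close_gap_event lam E e K j u_first) \<le> ennreal ((1 - exp (-1))^2)"
proof -
  let ?M = "PiM E (\<lambda>_. exp_dist lam)"
  have "e 0 \<noteq> e 1"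
  proof
    assume "e 0 = e 1"
    then have "(0::nat) = 1" using K2 by (intro inj_onD[OF inj]) auto
    then show False by simp
  qed
  then have e01: "e 0 \<in> E" "e 1 \<in> E" "e 0 \<noteq> e 1" using eE K2 by auto
  have "close_gap_event lam E e K j u_first \<subseteq> {w \<in> space ?M. w (e 0) \<le> 1/lam \<and> w (e 1) \<le> 1/lam}"
  proof
    fix w assume w: "w \<in> close_gap_event lam E e K j u_first"
    then have ws: "w \<in> space ?M" and pos: "\<And>r. r < K \<Longrightarrow> 0 < w (e r)"
      by (auto simp: close_gap_event_def)
    define S where "S = (\<Sum>r<K. w (e r))"
    have le: "w (e r) \<le> S" if "r < K" for r
      unfolding S_def using that pos by (intro member_le_sum) (auto intro: less_imp_le)
    have "0 < S" using le[of 0] pos[of 0] K2 by simp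
    moreover have "path_time_gap e K j w = S \<or> path_time_gap e K j w = - S"
      using j by (auto simp: path_time_gap_def S_def atLeast0LessThan)
    ultimately have "S \<le> 1/lam" using w by (auto simp: close_gap_event_def split: if_splits)
    then show "w \<in> {w \<in> space ?M. w (e 0) \<le> 1/lam \<and> w (e 1) \<le> 1/lam}"
      using ws le[of 0] le[of 1] K2 by auto
  qed
  moreover have "{w \<in> space ?M. w (e 0) \<le> 1/lam \<and> w (e 1) \<le> 1/lam} \<in> sets ?M"
  proof -
    have [measurable]: "(\<lambda>w. w (e 0)) \<in> borel_measurable ?M" "(\<lambda>w. w (e 1)) \<in> borel_measurable ?M"
      using e01 by (auto intro: measurable_component_exp_dist)
    show ?thesis by measurable
  qed
  ultimately have "emeasure ?M (close_gap_event lam E e K j u_first)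
      \<le> emeasure ?M {w \<in> space ?M. w (e 0) \<le> 1/lam \<and> w (e 1) \<le> 1/lam}"
    by (rule emeasure_mono)
  also have "\<dots> = ennreal ((1 - exp (-1))^2)" by (rule emeasure_PiM_both_le_inv_rate[OF lam e01])
  finally show ?thesis .
qed

text \<open>If the source enters the path at an inner vertex, the gap is the difference of the two edges
  next to the entry vertex, shifted by an amount independent of them.\<close>

lemma emeasure_close_gap_event_inner_le:
  fixes e :: "nat \<Rightarrow> 'e" and E :: "'e set"
  assumes lam: "0 < lam" and fin: "finite E" and eE: "\<And>r. r < K \<Longrightarrow> e r \<in> E"
    and inj: "inj_on e {..<K}" and j: "0 < j" "j < K"
  shows "emeasure (PiM E (\<lambda>_. exp_dist lam)) (close_gap_event lam E e K j u_first) \<le> ennreal (1 - exp (-1/2))"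
proof -
  let ?M = "PiM E (\<lambda>_. exp_dist lam)"
  define a where "a = e (j - 1)"
  define b where "b = e j"
  have "a \<noteq> b"
  proof
    assume "a = b"
    then have "j - 1 = j" using j unfolding a_def b_def by (intro inj_onD[OF inj]) auto
    then show False using j by simp
  qed
  then have ab: "a \<in> E" "b \<in> E" "a \<noteq> b" using eE j by (auto simp: a_def b_def)
  define R where "R = (\<lambda>w::'e \<Rightarrow> real. (\<Sum>r\<in>{Suc j..<K}. w (e r)) - (\<Sum>r<j - 1. w (e r)))"
  have gap: "path_time_gap e K j w = w b - w a + R w" for w
  proof -
    have "(\<Sum>r\<in>{j..<K}. w (e r)) = w (e j) + (\<Sum>r\<in>{Suc j..<K}. w (e r))"
      using j by (simp add: sum.atLeast_Suc_lessThan)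
    moreover have "(\<Sum>r<j. w (e r)) = (\<Sum>r<j - 1. w (e r)) + w (e (j - 1))"
      using j lessThan_Suc[of "j - 1"] by simp
    ultimately show ?thesis by (simp add: path_time_gap_def R_def a_def b_def)
  qed
  define g where "g = (\<lambda>w. if u_first then - R w else - R w - 1/lam)"
  have g: "g \<in> borel_measurable ?M"
    unfolding g_def R_def using eE j
    by (cases u_first) (auto intro!: borel_measurable_diff measurable_sum_path_weights)
  have g_indep: "g w = g w'" if agree: "\<And>x. x \<noteq> a \<Longrightarrow> x \<noteq> b \<Longrightarrow> w x = w' x" for w w'
  proof -
    have "w (e r) = w' (e r)" if "r < K" "r \<noteq> j - 1" "r \<noteq> j" for r
      using agree that inj j unfolding a_def b_def inj_on_def by (metis lessThan_iff less_imp_diff_less)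
    then have "R w = R w'" unfolding R_def using j
      by (intro arg_cong2[where f="(-)"] sum.cong) auto
    then show ?thesis by (simp add: g_def)
  qed
  have "close_gap_event lam E e K j u_first \<subseteq> {w \<in> space ?M. g w \<le> w b - w a \<and> w b - w a \<le> g w + 1/lam}"
  proof
    fix w assume "w \<in> close_gap_event lam E e K j u_first"
    then have "w \<in> space ?M" and "if u_first then 0 \<le> path_time_gap e K j w \<and> path_time_gap e K j w \<le> 1/lam
        else -(1/lam) \<le> path_time_gap e K j w \<and> path_time_gap e K j w \<le> 0"
      unfolding close_gap_event_def by blast+
    then show "w \<in> {w \<in> space ?M. g w \<le> w b - w a \<and> w b - w a \<le> g w + 1/lam}"
      unfolding gap g_def by (cases u_first) auto
  qed
  moreover have "{w \<in> space ?M. g w \<le> w b - w a \<and> w b - w a \<le> g w + 1/lam} \<in> sets ?M"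
  proof -
    have [measurable]: "(\<lambda>x. x b - x a - g x) \<in> borel_measurable ?M"
      using ab g by (intro borel_measurable_diff measurable_component_exp_dist)
    have "{w \<in> space ?M. g w \<le> w b - w a \<and> w b - w a \<le> g w + 1/lam}
        = (\<lambda>x. x b - x a - g x) -` {0..1/lam} \<inter> space ?M"
      by auto
    then show ?thesis by simp
  qed
  ultimately have "emeasure ?M (close_gap_event lam E e K j u_first)
      \<le> emeasure ?M {w \<in> space ?M. g w \<le> w b - w a \<and> w b - w a \<le> g w + 1/lam}"
    by (rule emeasure_mono)
  also have "\<dots> \<le> ennreal (1 - exp (-1/2))"
    by (rule emeasure_PiM_diff_window_le[OF lam fin ab g g_indep])
  finally show ?thesis .
qed

lemma emeasure_close_gap_event_le:
  assumes lam: "0 < lam" and fin: "finite E" and eE: "\<And>r. r < K \<Longrightarrow> e r \<in> E"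
    and inj: "inj_on e {..<K}" and K2: "2 \<le> K" and j: "j \<le> K"
  shows "emeasure (PiM E (\<lambda>_. exp_dist lam)) (close_gap_event lam E e K j u_first) \<le> ennreal close_gap_bound"
proof (cases "j = 0 \<or> j = K")
  case True
  have "emeasure (PiM E (\<lambda>_. exp_dist lam)) (close_gap_event lam E e K j u_first)
      \<le> ennreal ((1 - exp (-1))^2)"
    by (rule emeasure_close_gap_event_end_le[OF lam eE inj K2 True])
  also have "\<dots> \<le> ennreal close_gap_bound" by (simp add: close_gap_bound_def ennreal_leI)
  finally show ?thesis .
next
  case False
  then have "emeasure (PiM E (\<lambda>_. exp_dist lam)) (close_gap_event lam E e K j u_first)
      \<le> ennreal (1 - exp (-1/2))"
    using j by (intro emeasure_close_gap_event_inner_le[OF lam fin eE inj]) auto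
  also have "\<dots> \<le> ennreal close_gap_bound" by (simp add: close_gap_bound_def ennreal_leI)
  finally show ?thesis .
qed

section \<open>Independent traces\<close>

lemma real_card_lessThan_eq_sum: "real (card {i. i < (n::nat) \<and> P i}) = (\<Sum>i<n. if P i then 1 else 0)"
  using sum.inter_filter[of "{..<n}" "\<lambda>_. 1::real" P] by simp

lemma majority_event_sets:
  fixes M :: "'b measure" and B :: "nat \<Rightarrow> 'b set"
  assumes B: "\<And>i. i < l \<Longrightarrow> B i \<in> sets M"
  shows "{\<omega> \<in> space (PiM {..<l} (\<lambda>_. M)). l \<le> 2 * card {i. i < l \<and> \<omega> i \<in> B i}}
    \<in> sets (PiM {..<l} (\<lambda>_. M))"
proof -
  let ?P = "PiM {..<l} (\<lambda>_. M)"
  have "(\<lambda>\<omega>. if \<omega> i \<in> B i then 1 else 0 :: real) \<in> borel_measurable ?P" if "i \<in> {..<l}" for i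
  proof -
    have [measurable]: "(\<lambda>\<omega>. \<omega> i) \<in> measurable ?P M" "B i \<in> sets M"
      using that B by (auto intro: measurable_component_singleton)
    show ?thesis by measurable
  qed
  then have [measurable]: "(\<lambda>\<omega>. \<Sum>i<l. if \<omega> i \<in> B i then 1 else 0 :: real) \<in> borel_measurable ?P"
    by (rule borel_measurable_sum)
  have "{\<omega> \<in> space ?P. l \<le> 2 * card {i. i < l \<and> \<omega> i \<in> B i}}
      = {\<omega> \<in> space ?P. real l \<le> 2 * (\<Sum>i<l. if \<omega> i \<in> B i then 1 else 0)}"
    unfolding real_card_lessThan_eq_sum[symmetric] by (auto simp flip: of_nat_le_iff)
  also have "\<dots> \<in> sets ?P" by measurable
  finally show ?thesis .
qed

lemma two_sqrt_odds_eq: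
  fixes p :: real
  assumes "0 < p" "p < 1"
  shows "(1 + ((1 - p) / p - 1) * p) / sqrt ((1 - p) / p) = 2 * sqrt (p * (1 - p))"
proof -
  have sq: "sqrt (1 - p) * sqrt (1 - p) = 1 - p" "0 < sqrt (1 - p)" "0 < sqrt p"
    using assms by auto
  have "1 + ((1 - p) / p - 1) * p = 2 * (1 - p)"
    using assms by (simp add: field_simps)
  also have "\<dots> / sqrt ((1 - p) / p) = 2 * (sqrt (1 - p) * sqrt (1 - p)) * sqrt p / sqrt (1 - p)"
    using assms by (simp add: real_sqrt_divide sq)
  also have "\<dots> = 2 * (sqrt p * sqrt (1 - p))"
    using sq(2) by (simp only: divide_eq_eq) (simp add: algebra_simps)
  also have "\<dots> = 2 * sqrt (p * (1 - p))"
    by (simp only: real_sqrt_mult)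
  finally show ?thesis .
qed

text \<open>Chernoff bound: Markov's inequality for the product of the weights theta = (1 - p) / p on
  occurring and 1 on non-occurring events, which is at least sqrt theta ^ l on the majority event.\<close>

lemma emeasure_PiM_majority_le:
  fixes M :: "'b measure" and B :: "nat \<Rightarrow> 'b set" and p :: real
  assumes M: "prob_space M" and B: "\<And>i. i < l \<Longrightarrow> B i \<in> sets M"
    and Bp: "\<And>i. i < l \<Longrightarrow> emeasure M (B i) \<le> ennreal p"
    and p: "0 < p" "p \<le> 1/2"
  shows "emeasure (PiM {..<l} (\<lambda>_. M)) {\<omega> \<in> space (PiM {..<l} (\<lambda>_. M)). l \<le> 2 * card {i. i < l \<and> \<omega> i \<in> B i}}
         \<le> ennreal ((2 * sqrt (p * (1 - p))) ^ l)"
proof -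
  interpret M: prob_space M by (rule M)
  interpret PS: product_prob_space "\<lambda>_::nat. M" "{..<l}" by unfold_locales
  let ?P = "PiM {..<l} (\<lambda>_. M)"
  define \<theta> where "\<theta> = (1 - p) / p"
  have th1: "1 \<le> \<theta>" using p by (simp add: \<theta>_def field_simps)
  define s where "s = sqrt \<theta>"
  have s1: "1 \<le> s" using th1 by (simp add: s_def)
  have ss: "s * s = \<theta>" using th1 by (simp add: s_def)
  define f where "f = (\<lambda>i x. if x \<in> B i then \<theta> else 1)"
  define S where "S = {\<omega> \<in> space ?P. l \<le> 2 * card {i. i < l \<and> \<omega> i \<in> B i}}"
  have S_sets: "S \<in> sets ?P" unfolding S_def using B by (rule majority_event_sets)
  have f_nonneg: "0 \<le> f i x" for i x using th1 by (simp add: f_def)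
  have f: "(\<lambda>x. ennreal (f i x)) \<in> borel_measurable M" if "i < l" for i
  proof -
    have [measurable]: "B i \<in> sets M" using B that .
    show ?thesis unfolding f_def by measurable
  qed
  have markov: "indicator S \<omega> \<le> ennreal ((\<Prod>i<l. f i (\<omega> i)) / s ^ l)" for \<omega>
  proof (cases "\<omega> \<in> S")
    case True
    let ?k = "card {i. i < l \<and> \<omega> i \<in> B i}"
    have "(\<Prod>i<l. f i (\<omega> i)) = (\<Prod>i\<in>{i \<in> {..<l}. \<omega> i \<in> B i}. \<theta>)"
      unfolding f_def by (rule prod.inter_filter[symmetric]) simp
    also have "\<dots> = \<theta> ^ ?k" by (simp add: Collect_conj_eq lessThan_def)
    finally have prod: "(\<Prod>i<l. f i (\<omega> i)) = \<theta> ^ ?k" .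
    have "s ^ l \<le> s ^ (2 * ?k)"
      using s1 True by (intro power_increasing) (auto simp: S_def)
    also have "\<dots> = \<theta> ^ ?k" by (simp add: power_mult ss[symmetric] power2_eq_square)
    finally have "1 \<le> (\<Prod>i<l. f i (\<omega> i)) / s ^ l" using s1 by (simp add: prod)
    then show ?thesis using True by simp
  qed simp
  have factor: "(\<integral>\<^sup>+ x. ennreal (f i x) \<partial>M) \<le> ennreal (1 + (\<theta> - 1) * p)" if i: "i < l" for i
  proof -
    have "(\<integral>\<^sup>+ x. ennreal (f i x) \<partial>M) = (\<integral>\<^sup>+ x. 1 + ennreal (\<theta> - 1) * indicator (B i) x \<partial>M)"
    proof (intro nn_integral_cong)
      fix x
      have "ennreal \<theta> = 1 + ennreal (\<theta> - 1)" using ennreal_plus[of 1 "\<theta> - 1"] th1 by simp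
      then show "ennreal (f i x) = 1 + ennreal (\<theta> - 1) * indicator (B i) x"
        by (simp add: f_def indicator_def)
    qed
    also have "\<dots> = 1 + ennreal (\<theta> - 1) * emeasure M (B i)"
      using B[OF i] by (simp add: nn_integral_add nn_integral_cmult_indicator M.emeasure_space_1)
    also have "\<dots> \<le> 1 + ennreal (\<theta> - 1) * ennreal p"
      using Bp[OF i] by (intro add_mono mult_left_mono) auto
    also have "\<dots> = ennreal (1 + (\<theta> - 1) * p)"
      using th1 p ennreal_plus[of 1 "(\<theta> - 1) * p"] by (simp add: ennreal_mult[symmetric])
    finally show ?thesis .
  qed
  have "emeasure ?P S = (\<integral>\<^sup>+ \<omega>. indicator S \<omega> \<partial>?P)" using S_sets by simp
  also have "\<dots> \<le> (\<integral>\<^sup>+ \<omega>. ennreal ((\<Prod>i<l. f i (\<omega> i)) / s ^ l) \<partial>?P)"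
    by (intro nn_integral_mono markov)
  also have "\<dots> = (\<integral>\<^sup>+ \<omega>. ennreal (1 / s ^ l) * (\<Prod>i<l. ennreal (f i (\<omega> i))) \<partial>?P)"
    using s1 f_nonneg by (intro nn_integral_cong) (simp add: prod_ennreal ennreal_mult[symmetric] prod_nonneg)
  also have "\<dots> = ennreal (1 / s ^ l) * (\<integral>\<^sup>+ \<omega>. (\<Prod>i<l. ennreal (f i (\<omega> i))) \<partial>?P)"
    using f by (intro nn_integral_cmult borel_measurable_prod_ennreal) (auto intro: measurable_compose[OF measurable_component_singleton])
  also have "(\<integral>\<^sup>+ \<omega>. (\<Prod>i<l. ennreal (f i (\<omega> i))) \<partial>?P) = (\<Prod>i<l. \<integral>\<^sup>+ x. ennreal (f i x) \<partial>M)"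
    using f by (intro PS.product_nn_integral_prod) auto
  also have "\<dots> \<le> (\<Prod>i<l. ennreal (1 + (\<theta> - 1) * p))"
    by (intro prod_mono_ennreal) (auto intro: factor)
  also have "\<dots> = ennreal ((1 + (\<theta> - 1) * p) ^ l)"
    using th1 p by (simp add: ennreal_power[symmetric])
  also have "ennreal (1 / s ^ l) * \<dots> = ennreal (((1 + (\<theta> - 1) * p) / s) ^ l)"
    using s1 th1 p by (simp add: ennreal_mult[symmetric] power_divide)
  also have "(1 + (\<theta> - 1) * p) / s = 2 * sqrt (p * (1 - p))"
    unfolding s_def \<theta>_def using p by (intro two_sqrt_odds_eq) auto
  finally show ?thesis by (simp add: S_def mult_left_mono)
qed

lemma measurable_trace_component:
  assumes "i \<in> I" "e \<in> E"
  shows "(\<lambda>\<omega>. \<omega> i e) \<in> borel_measurable (PiM I (\<lambda>_. PiM E (\<lambda>_. exp_dist lam)))"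
  using measurable_compose[OF measurable_component_singleton[OF assms(1)] measurable_component_exp_dist[OF assms(2)]] .

lemma measurable_infection_time:
  assumes tree: "is_tree V E" and "s \<in> V" "x \<in> V" "i \<in> I"
  shows "(\<lambda>\<omega>. infection_time V E (\<omega> i) s x) \<in> borel_measurable (PiM I (\<lambda>_. PiM E (\<lambda>_. exp_dist lam)))"
proof -
  obtain p where p: "is_path V E s x p" using tree_path_exists[OF tree assms(2,3)] by blast
  have "(\<lambda>\<omega>. infection_time V E (\<omega> i) s x) = (\<lambda>\<omega>. \<Sum>k<length p - 1. \<omega> i {p!k, p!Suc k})"
    using infection_time_tree_path[OF tree assms(2,3) p] by (simp add: path_len_conv_sum)
  also have "\<dots> \<in> borel_measurable (PiM I (\<lambda>_. PiM E (\<lambda>_. exp_dist lam)))"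
    using is_path_edge[OF p] assms(4) by (intro borel_measurable_sum measurable_trace_component) auto
  finally show ?thesis .
qed

lemma borel_measurable_sort_nth:
  fixes f :: "nat \<Rightarrow> 'x \<Rightarrow> real"
  assumes f: "\<And>i. i < n \<Longrightarrow> f i \<in> borel_measurable M" and k: "k < n"
  shows "(\<lambda>\<omega>. sort (map (\<lambda>i. f i \<omega>) [0..<n]) ! k) \<in> borel_measurable M"
proof (subst borel_measurable_iff_le, intro allI)
  fix a :: real
  have [measurable]: "(\<lambda>\<omega>. \<Sum>i<n. if f i \<omega> \<le> a then 1 else 0 :: real) \<in> borel_measurable M"
  proof (rule borel_measurable_sum)
    fix i assume "i \<in> {..<n}"
    then have [measurable]: "f i \<in> borel_measurable M" using f by auto
    show "(\<lambda>\<omega>. if f i \<omega> \<le> a then 1 else 0 :: real) \<in> borel_measurable M" by measurable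
  qed
  have "(sort (map (\<lambda>i. f i \<omega>) [0..<n]) ! k \<le> a) \<longleftrightarrow> real k < (\<Sum>i<n. if f i \<omega> \<le> a then 1 else 0)"
    for \<omega>
    using sort_nth_le_iff[of k "map (\<lambda>i. f i \<omega>) [0..<n]" a] k
    by (simp add: length_filter_conv_card real_card_lessThan_eq_sum[symmetric] cong: conj_cong)
  then have "{w \<in> space M. sort (map (\<lambda>i. f i w) [0..<n]) ! k \<le> a}
      = {w \<in> space M. real k < (\<Sum>i<n. if f i w \<le> a then 1 else 0)}"
    by blast
  also have "\<dots> \<in> sets M" by measurable
  finally show "{w \<in> space M. sort (map (\<lambda>i. f i w) [0..<n]) ! k \<le> a} \<in> sets M" .
qed

lemma borel_measurable_median:
  fixes f :: "nat \<Rightarrow> 'x \<Rightarrow> real"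
  assumes f: "\<And>i. i < n \<Longrightarrow> f i \<in> borel_measurable M"
  shows "(\<lambda>\<omega>. median (map (\<lambda>i. f i \<omega>) [0..<n])) \<in> borel_measurable M"
proof (cases "n = 0")
  case False
  have [measurable]: "(\<lambda>\<omega>. sort (map (\<lambda>i. f i \<omega>) [0..<n]) ! (n div 2 - 1)) \<in> borel_measurable M"
    "(\<lambda>\<omega>. sort (map (\<lambda>i. f i \<omega>) [0..<n]) ! (n div 2)) \<in> borel_measurable M"
    using False by (intro borel_measurable_sort_nth f; simp)+
  show ?thesis unfolding median_def Let_def length_map length_upt diff_zero by measurable
qed (simp add: median_def)

lemma alg_cost_gt_sets:
  assumes tree: "is_tree V E" and src: "\<forall>i<l. src i \<in> V" and uV: "u \<in> V" and vV: "v \<in> V"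
  shows "{\<omega> \<in> space (trace_space E lam l). alg_cost V (\<lambda>i x. infection_time V E (\<omega> i) (src i) x) l u v > ereal h}
     \<in> sets (trace_space E lam l)"
proof -
  let ?T = "trace_space E lam l"
  define t where "t = (\<lambda>\<omega> i x. infection_time V E (\<omega> i) (src i) x)"
  have finV: "finite V" using tree by (simp add: is_tree_def)
  have t: "(\<lambda>\<omega>. t \<omega> i x) \<in> borel_measurable ?T" if "i < l" "x \<in> V" for i x
    unfolding t_def trace_space_def using that src by (intro measurable_infection_time[OF tree]) auto
  define separated where "separated = (\<Union>q\<in>V. \<Union>i\<in>{..<l}. \<Union>j\<in>{..<l}.
      {\<omega> \<in> space ?T. t \<omega> i q < t \<omega> i u \<and> t \<omega> i u < t \<omega> i v \<and> t \<omega> j q < t \<omega> j v \<and> t \<omega> j v < t \<omega> j u})"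
  have "separated \<in> sets ?T" unfolding separated_def
  proof (intro sets.finite_UN ballI)
    fix q i j assume "q \<in> V" "i \<in> {..<l}" "j \<in> {..<l}"
    then have [measurable]: "(\<lambda>\<omega>. t \<omega> i q) \<in> borel_measurable ?T" "(\<lambda>\<omega>. t \<omega> i u) \<in> borel_measurable ?T"
      "(\<lambda>\<omega>. t \<omega> i v) \<in> borel_measurable ?T" "(\<lambda>\<omega>. t \<omega> j q) \<in> borel_measurable ?T"
      "(\<lambda>\<omega>. t \<omega> j v) \<in> borel_measurable ?T" "(\<lambda>\<omega>. t \<omega> j u) \<in> borel_measurable ?T"
      using uV vV by (auto intro: t)
    show "{\<omega> \<in> space ?T. t \<omega> i q < t \<omega> i u \<and> t \<omega> i u < t \<omega> i v \<and> t \<omega> j q < t \<omega> j v \<and> t \<omega> j v < t \<omega> j u}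
      \<in> sets ?T" by measurable
  qed (use finV in auto)
  moreover have "(\<lambda>\<omega>. median (map (\<lambda>i. \<bar>t \<omega> i u - t \<omega> i v\<bar>) [0..<l])) \<in> borel_measurable ?T"
    using t uV vV by (intro borel_measurable_median borel_measurable_abs borel_measurable_diff) auto
  then have "{\<omega> \<in> space ?T. h < median (map (\<lambda>i. \<bar>t \<omega> i u - t \<omega> i v\<bar>) [0..<l])} \<in> sets ?T"
    by measurable
  moreover have "{\<omega> \<in> space ?T. alg_cost V (\<lambda>i x. infection_time V E (\<omega> i) (src i) x) l u v > ereal h}
      = separated \<union> {\<omega> \<in> space ?T. h < median (map (\<lambda>i. \<bar>t \<omega> i u - t \<omega> i v\<bar>) [0..<l])}"
    unfolding separated_def alg_cost_def t_def by auto
  ultimately show ?thesis by simp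
qed

section \<open>The failure probability\<close>

lemma alg_cost_le_imp_majority_close_gap:
  fixes \<omega> :: "nat \<Rightarrow> 'a set \<Rightarrow> real" and P :: "'a list" and e :: "nat \<Rightarrow> 'a set"
  assumes P: "is_path V E u v P" and K: "K = length P - 1"
    and jf: "\<And>i. i < l \<Longrightarrow> jf i < length P"
    and T_path: "\<And>i m. i < l \<Longrightarrow> jf i \<le> m \<Longrightarrow> m < length P \<Longrightarrow>
        infection_time V E (\<omega> i) (src i) (P!m) = D i + (\<Sum>r\<in>{jf i..<m}. \<omega> i (e r))"
    and T_u: "\<And>i. i < l \<Longrightarrow> infection_time V E (\<omega> i) (src i) u = D i + (\<Sum>r<jf i. \<omega> i (e r))"
    and space: "\<And>i. i < l \<Longrightarrow> \<omega> i \<in> space (PiM E (\<lambda>_. exp_dist lam))"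
    and pos: "\<And>i r. i < l \<Longrightarrow> r < K \<Longrightarrow> 0 < \<omega> i (e r)"
    and cost: "\<not> alg_cost V (\<lambda>i x. infection_time V E (\<omega> i) (src i) x) l u v > ereal (1/lam)"
  shows "\<exists>c\<in>insert 0 (jf ` {..<l}).
    l \<le> 2 * card {i. i < l \<and> \<omega> i \<in> close_gap_event lam E e K (jf i) (jf i \<le> c)}"
proof -
  define t where "t = (\<lambda>i x. infection_time V E (\<omega> i) (src i) x)"
  have Pne: "P \<noteq> []" and sP: "set P \<subseteq> V" using P unfolding is_path_def by auto
  have lenP: "length P = Suc K" using Pne K by simp
  have PK: "P ! K = v" using P Pne K unfolding is_path_def by (simp add: last_conv_nth)
  have no_separator: "\<not> (\<exists>q\<in>V. \<exists>i<l. \<exists>j<l. t i q < t i u \<and> t i u < t i v \<and> t j q < t j v \<and> t j v < t j u)"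
    and median: "median (map (\<lambda>i. \<bar>t i u - t i v\<bar>) [0..<l]) \<le> 1/lam"
    using cost unfolding alg_cost_def t_def[symmetric] by (auto split: if_splits)
  have tu: "t i u = D i + (\<Sum>r<jf i. \<omega> i (e r))" if "i < l" for i
    using T_u[OF that] by (simp add: t_def)
  have tv: "t i v = D i + (\<Sum>r\<in>{jf i..<K}. \<omega> i (e r))" if "i < l" for i
    using T_path[OF that, of K] jf[OF that] lenP PK by (simp add: t_def)
  obtain c where c: "c \<in> insert 0 (jf ` {..<l})"
    and oriented: "\<And>i. i < l \<Longrightarrow> (jf i \<le> c \<longrightarrow> t i u \<le> t i v) \<and> (c < jf i \<longrightarrow> t i v \<le> t i u)"
  proof -
    have "\<exists>c\<in>insert 0 (jf ` {..<l}). \<forall>i<l.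
        (jf i \<le> c \<longrightarrow> D i + (\<Sum>r<jf i. \<omega> i (e r)) \<le> D i + (\<Sum>r\<in>{jf i..<K}. \<omega> i (e r)))
      \<and> (c < jf i \<longrightarrow> D i + (\<Sum>r\<in>{jf i..<K}. \<omega> i (e r)) \<le> D i + (\<Sum>r<jf i. \<omega> i (e r)))"
    proof (rule consistent_cut_exists[where T = "\<lambda>i m. t i (P!m)"])
      show "\<And>i. i < l \<Longrightarrow> jf i \<le> K" using jf lenP by fastforce
      show "\<And>i m. i < l \<Longrightarrow> jf i \<le> m \<Longrightarrow> m \<le> K \<Longrightarrow> t i (P!m) = D i + (\<Sum>r\<in>{jf i..<m}. \<omega> i (e r))"
        using T_path lenP by (simp add: t_def)
      fix a b m assume ab: "a < l" "b < l" "m \<le> K"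
      then have "P ! m \<in> V" using sP lenP by auto
      then have "\<not> (t a (P!m) < t a u \<and> t a u < t a v \<and> t b (P!m) < t b v \<and> t b v < t b u)"
        using no_separator ab by blast
      then show "\<not> (t a (P!m) < D a + (\<Sum>r<jf a. \<omega> a (e r))
          \<and> D a + (\<Sum>r<jf a. \<omega> a (e r)) < D a + (\<Sum>r\<in>{jf a..<K}. \<omega> a (e r))
          \<and> t b (P!m) < D b + (\<Sum>r\<in>{jf b..<K}. \<omega> b (e r))
          \<and> D b + (\<Sum>r\<in>{jf b..<K}. \<omega> b (e r)) < D b + (\<Sum>r<jf b. \<omega> b (e r)))"
        unfolding tu[OF ab(1)] tv[OF ab(1)] tu[OF ab(2)] tv[OF ab(2)] .
    qed (use pos in simp)
    then obtain c where c: "c \<in> insert 0 (jf ` {..<l})" and c_cut: "\<forall>i<l.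
        (jf i \<le> c \<longrightarrow> D i + (\<Sum>r<jf i. \<omega> i (e r)) \<le> D i + (\<Sum>r\<in>{jf i..<K}. \<omega> i (e r)))
      \<and> (c < jf i \<longrightarrow> D i + (\<Sum>r\<in>{jf i..<K}. \<omega> i (e r)) \<le> D i + (\<Sum>r<jf i. \<omega> i (e r)))"
      by blast
    have "(jf i \<le> c \<longrightarrow> t i u \<le> t i v) \<and> (c < jf i \<longrightarrow> t i v \<le> t i u)" if "i < l" for i
      using c_cut that unfolding tu[OF that] tv[OF that] by blast
    with c show ?thesis by (rule that)
  qed
  have "l \<le> 2 * length (filter (\<lambda>x. x \<le> 1/lam) (map (\<lambda>i. \<bar>t i u - t i v\<bar>) [0..<l]))"
    using median_le_imp_majority_le[OF median] by simp
  also have "length (filter (\<lambda>x. x \<le> 1/lam) (map (\<lambda>i. \<bar>t i u - t i v\<bar>) [0..<l]))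
      = card {i. i < l \<and> \<bar>t i u - t i v\<bar> \<le> 1/lam}"
    by (simp add: length_filter_conv_card cong: conj_cong)
  also have "\<dots> \<le> card {i. i < l \<and> \<omega> i \<in> close_gap_event lam E e K (jf i) (jf i \<le> c)}"
  proof (rule card_mono)
    show "{i. i < l \<and> \<bar>t i u - t i v\<bar> \<le> 1/lam}
      \<subseteq> {i. i < l \<and> \<omega> i \<in> close_gap_event lam E e K (jf i) (jf i \<le> c)}"
    proof safe
      fix i assume i: "i < l" and close: "\<bar>t i u - t i v\<bar> \<le> 1/lam"
      have "path_time_gap e K (jf i) (\<omega> i) = t i v - t i u"
        using tu[OF i] tv[OF i] by (simp add: path_time_gap_def)
      then show "\<omega> i \<in> close_gap_event lam E e K (jf i) (jf i \<le> c)"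
        unfolding close_gap_event_def using space[OF i] pos[OF i] oriented[OF i] close by auto
    qed
  qed simp
  finally show ?thesis using c by auto
qed

lemma AE_trace_space_pos:
  assumes "0 < lam" "finite E"
  shows "AE \<omega> in trace_space E lam l. \<forall>i\<in>{..<l}. \<forall>e\<in>E. 0 < \<omega> i e"
proof -
  interpret X: prob_space "exp_dist lam" using assms(1) by (rule prob_space_exponential_density)
  interpret PE: product_prob_space "\<lambda>_::'a set. exp_dist lam" E by unfold_locales
  interpret M: prob_space "PiM E (\<lambda>_. exp_dist lam)" by (rule prob_space_PiM) (rule X.prob_space_axioms)
  interpret PT: product_prob_space "\<lambda>_::nat. PiM E (\<lambda>_. exp_dist lam)" "{..<l}" by unfold_locales
  have "AE w in PiM E (\<lambda>_. exp_dist lam). \<forall>e\<in>E. 0 < w e"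
    using assms by (intro AE_finite_allI PE.AE_component AE_exp_dist_pos) auto
  then show ?thesis
    unfolding trace_space_def using assms(2) by (intro AE_finite_allI PT.AE_component) auto
qed

definition alg_error_rate :: real where
  "alg_error_rate = 2 * sqrt (close_gap_bound * (1 - close_gap_bound))"

lemma alg_error_rate_nonneg: "0 \<le> alg_error_rate"
  using close_gap_bound_pos close_gap_bound_less_half by (simp add: alg_error_rate_def)

lemma alg_error_rate_less_one: "alg_error_rate < 1"
proof -
  define p where "p = close_gap_bound"
  have "0 < (1/2 - p)^2" using close_gap_bound_less_half by (simp add: p_def)
  moreover have "(1/2 - p)^2 = (1/2)^2 - p * (1 - p)" by (simp add: power2_eq_square algebra_simps)
  ultimately have "sqrt (p * (1 - p)) < sqrt ((1/2)^2)" by (intro real_sqrt_less_mono) linarith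
  then show ?thesis by (simp add: alg_error_rate_def p_def)
qed

lemma emeasure_alg_cost_le_inv_rate:
  assumes tree: "is_tree V E" and lam: "0 < lam" and src: "\<forall>i<l. src i \<in> V"
    and uV: "u \<in> V" and vV: "v \<in> V" and uv: "u \<noteq> v" and nE: "{u, v} \<notin> E"
  shows "emeasure (trace_space E lam l) {\<omega> \<in> space (trace_space E lam l).
      \<not> alg_cost V (\<lambda>i x. infection_time V E (\<omega> i) (src i) x) l u v > ereal (1 / lam)}
    \<le> ennreal (real (Suc l) * alg_error_rate ^ l)"
proof -
  define M where "M = PiM E (\<lambda>_. exp_dist lam)"
  have T: "trace_space E lam l = PiM {..<l} (\<lambda>_. M)" by (simp add: trace_space_def M_def)
  have "E \<subseteq> Pow V" "finite V" using tree unfolding is_tree_def by fastforce+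
  then have finE: "finite E" by (meson finite_Pow_iff finite_subset)
  interpret X: prob_space "exp_dist lam" using lam by (rule prob_space_exponential_density)
  have M: "prob_space M" unfolding M_def by (rule prob_space_PiM) (rule X.prob_space_axioms)
  obtain P where P: "is_path V E u v P" using tree_path_exists[OF tree uV vV] by blast
  define K where "K = length P - 1"
  define e where "e = (\<lambda>r. {P!r, P!Suc r})"
  have K2: "2 \<le> K" using nonadjacent_path_length[OF P uv nE] by (simp add: K_def)
  have eE: "\<And>r. r < K \<Longrightarrow> e r \<in> E" unfolding e_def K_def using is_path_edge[OF P] by simp
  have inj: "inj_on e {..<K}"
    unfolding e_def K_def using P by (intro path_edges_inj) (simp add: is_path_def)
  have "\<forall>i\<in>{..<l}. \<exists>j Q. j < length P \<and>
      (\<forall>w m. j \<le> m \<longrightarrow> m < length P \<longrightarrow>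
        infection_time V E w (src i) (P!m) = path_len w Q + (\<Sum>r\<in>{j..<m}. w (e r))) \<and>
      (\<forall>w. infection_time V E w (src i) u = path_len w Q + (\<Sum>r<j. w (e r)))"
    using infection_time_along_path[OF tree P] src unfolding e_def by auto
  then obtain jf Qf where jf: "\<And>i. i < l \<Longrightarrow> jf i < length P"
    and T_path: "\<And>i w m. i < l \<Longrightarrow> jf i \<le> m \<Longrightarrow> m < length P \<Longrightarrow>
        infection_time V E w (src i) (P!m) = path_len w (Qf i) + (\<Sum>r\<in>{jf i..<m}. w (e r))"
    and T_u: "\<And>i w. i < l \<Longrightarrow> infection_time V E w (src i) u = path_len w (Qf i) + (\<Sum>r<jf i. w (e r))"
    by (metis lessThan_iff)
  define close where "close = (\<lambda>c i. close_gap_event lam E e K (jf i) (jf i \<le> c))"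
  define majority where "majority = (\<lambda>c. {\<omega> \<in> space (PiM {..<l} (\<lambda>_. M)).
      l \<le> 2 * card {i. i < l \<and> \<omega> i \<in> close c i}})"
  define cuts where "cuts = insert 0 (jf ` {..<l})"
  have close_sets: "close c i \<in> sets M" if "i < l" for c i
    unfolding close_def M_def using eE jf[OF that] K_def by (intro close_gap_event_sets) auto
  have majority_sets: "majority c \<in> sets (PiM {..<l} (\<lambda>_. M))" for c
    unfolding majority_def using close_sets by (rule majority_event_sets)
  have majority_le: "emeasure (PiM {..<l} (\<lambda>_. M)) (majority c) \<le> ennreal (alg_error_rate ^ l)" for c
  proof -
    have "emeasure M (close c i) \<le> ennreal close_gap_bound" if "i < l" for i
      unfolding close_def M_def using lam finE eE inj K2 jf[OF that] K_def
      by (intro emeasure_close_gap_event_le) auto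
    then show ?thesis
      unfolding majority_def alg_error_rate_def
      using emeasure_PiM_majority_le[OF M close_sets] close_gap_bound_pos close_gap_bound_less_half
      by simp
  qed
  have "AE \<omega> in PiM {..<l} (\<lambda>_. M). \<omega> \<in> {\<omega> \<in> space (PiM {..<l} (\<lambda>_. M)).
      \<not> alg_cost V (\<lambda>i x. infection_time V E (\<omega> i) (src i) x) l u v > ereal (1 / lam)}
    \<longrightarrow> \<omega> \<in> (\<Union>c\<in>cuts. majority c)"
    using AE_trace_space_pos[OF lam finE, of l] unfolding T
  proof (rule AE_mp, intro AE_I2 impI)
    fix \<omega> assume pos: "\<forall>i\<in>{..<l}. \<forall>e\<in>E. 0 < \<omega> i e"
      and \<omega>: "\<omega> \<in> {\<omega> \<in> space (PiM {..<l} (\<lambda>_. M)).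
        \<not> alg_cost V (\<lambda>i x. infection_time V E (\<omega> i) (src i) x) l u v > ereal (1 / lam)}"
    have "\<exists>c\<in>cuts. l \<le> 2 * card {i. i < l \<and> \<omega> i \<in> close c i}"
      unfolding cuts_def close_def
    proof (rule alg_cost_le_imp_majority_close_gap[where D = "\<lambda>i. path_len (\<omega> i) (Qf i)"
          and V = V and u = u and v = v and src = src and P = P])
      show "infection_time V E (\<omega> i) (src i) (P!m) = path_len (\<omega> i) (Qf i) + (\<Sum>r\<in>{jf i..<m}. \<omega> i (e r))"
        if "i < l" "jf i \<le> m" "m < length P" for i m
        using T_path that .
      show "infection_time V E (\<omega> i) (src i) u = path_len (\<omega> i) (Qf i) + (\<Sum>r<jf i. \<omega> i (e r))"
        if "i < l" for i
        using T_u that .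
      show "\<omega> i \<in> space (PiM E (\<lambda>_. exp_dist lam))" if "i < l" for i
        using \<omega> that by (auto simp: space_PiM M_def)
      show "0 < \<omega> i (e r)" if "i < l" "r < K" for i r
        using pos eE that by auto
    qed (use P jf \<omega> K_def in auto)
    then show "\<omega> \<in> (\<Union>c\<in>cuts. majority c)" using \<omega> unfolding majority_def by auto
  qed
  then have "emeasure (trace_space E lam l) {\<omega> \<in> space (trace_space E lam l).
      \<not> alg_cost V (\<lambda>i x. infection_time V E (\<omega> i) (src i) x) l u v > ereal (1 / lam)}
    \<le> emeasure (PiM {..<l} (\<lambda>_. M)) (\<Union>c\<in>cuts. majority c)"
    unfolding T using majority_sets by (intro emeasure_mono_AE) (auto simp: cuts_def)
  also have "\<dots> \<le> (\<Sum>c\<in>cuts. emeasure (PiM {..<l} (\<lambda>_. M)) (majority c))"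
    using majority_sets by (intro emeasure_subadditive_finite) (auto simp: cuts_def)
  also have "\<dots> \<le> (\<Sum>c\<in>cuts. ennreal (alg_error_rate ^ l))" by (intro sum_mono majority_le)
  also have "\<dots> = ennreal (real (card cuts) * alg_error_rate ^ l)"
    using alg_error_rate_nonneg by (simp add: ennreal_mult ennreal_of_nat_eq_real_of_nat)
  also have "\<dots> \<le> ennreal (real (Suc l) * alg_error_rate ^ l)"
  proof -
    have "card cuts \<le> Suc (card (jf ` {..<l}))" unfolding cuts_def by (rule card_insert_le_m1) auto
    also have "card (jf ` {..<l}) \<le> l" using card_image_le[of "{..<l}" jf] by simp
    finally show ?thesis using alg_error_rate_nonneg by (intro ennreal_leI mult_right_mono) auto
  qed
  finally show ?thesis .
qed

lemma Suc_mult_power_le: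
  fixes x :: real
  assumes "0 \<le> x" "x < 1"
  shows "real (Suc n) * x ^ n \<le> 1 / (1 - x)"
proof -
  have "real (Suc n) * x ^ n = (\<Sum>i<Suc n. x ^ n)" by simp
  also have "\<dots> \<le> (\<Sum>i<Suc n. x ^ i)"
    using assms by (intro sum_mono power_decreasing) auto
  also have "\<dots> = (1 - x ^ Suc n) / (1 - x)"
    using assms by (simp add: sum_gp_strict del: sum.lessThan_Suc)
  also have "\<dots> \<le> 1 / (1 - x)"
    using assms by (intro divide_right_mono) auto
  finally show ?thesis .
qed

lemma measure_alg_cost_gt_inv_rate_ge:
  assumes "is_tree V E" "0 < lam" "\<forall>i<l. src i \<in> V" "u \<in> V" "v \<in> V" "u \<noteq> v" "{u, v} \<notin> E"
  shows "1 - real (Suc l) * alg_error_rate ^ l \<le> measure (trace_space E lam l)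
      {\<omega> \<in> space (trace_space E lam l).
         alg_cost V (\<lambda>i x. infection_time V E (\<omega> i) (src i) x) l u v > ereal (1 / lam)}"
proof -
  let ?T = "trace_space E lam l"
  let ?G = "{\<omega> \<in> space ?T. alg_cost V (\<lambda>i x. infection_time V E (\<omega> i) (src i) x) l u v > ereal (1 / lam)}"
  interpret prob_space ?T
    unfolding trace_space_def using assms(2) by (intro prob_space_PiM prob_space_exponential_density)
  have "?G \<in> sets ?T" using assms by (intro alg_cost_gt_sets) auto
  moreover have "space ?T - ?G = {\<omega> \<in> space ?T.
      \<not> alg_cost V (\<lambda>i x. infection_time V E (\<omega> i) (src i) x) l u v > ereal (1 / lam)}" by auto
  ultimately have "1 - measure ?T ?G \<le> real (Suc l) * alg_error_rate ^ l"
    using emeasure_alg_cost_le_inv_rate[OF assms] alg_error_rate_nonneg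
    by (simp add: prob_compl[symmetric] emeasure_eq_measure)
  then show ?thesis by linarith
qed

theorem lemma5:
  "\<exists>c2 c3::real. 0 < c3 \<and> c3 < 1 \<and>
    (\<forall>(V::'a set) E (lam::real) (l::nat) (src::nat \<Rightarrow> 'a) u v.
       is_tree V E \<and> 0 < lam \<and> (\<forall>i<l. src i \<in> V) \<and> u \<in> V \<and> v \<in> V \<and> u \<noteq> v \<and> {u, v} \<notin> E
       \<longrightarrow> measure (trace_space E lam l)
             {\<omega> \<in> space (trace_space E lam l).
                alg_cost V (\<lambda>i x. infection_time V E (\<omega> i) (src i) x) l u v > ereal (1 / lam)}
           \<ge> 1 - c2 * c3 ^ l)"
proof -
  text \<open>The factor l + 1 from the union bound over cuts is absorbed by taking c3 = sqrt alg_error_rate.\<close>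
  define c3 where "c3 = sqrt alg_error_rate"
  define c2 where "c2 = 1 / (1 - c3)"
  have c3: "0 < c3" "c3 < 1"
    using alg_error_rate_nonneg alg_error_rate_less_one close_gap_bound_pos close_gap_bound_less_half
    by (auto simp: c3_def alg_error_rate_def)
  have rate_le: "real (Suc l) * alg_error_rate ^ l \<le> c2 * c3 ^ l" for l
  proof -
    have "real (Suc l) * alg_error_rate ^ l = (real (Suc l) * c3 ^ l) * c3 ^ l"
      using alg_error_rate_nonneg by (simp add: c3_def power_mult_distrib[symmetric])
    also have "\<dots> \<le> c2 * c3 ^ l"
      using Suc_mult_power_le[of c3 l] c3 unfolding c2_def by (intro mult_right_mono) auto
    finally show ?thesis .
  qed
  show ?thesis
  proof (intro exI conjI allI impI)
    fix V :: "'a set" and E and lam :: real and l :: nat and src :: "nat \<Rightarrow> 'a" and u v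
    assume "is_tree V E \<and> 0 < lam \<and> (\<forall>i<l. src i \<in> V) \<and> u \<in> V \<and> v \<in> V \<and> u \<noteq> v \<and> {u, v} \<notin> E"
    then show "1 - c2 * c3 ^ l \<le> measure (trace_space E lam l)
      {\<omega> \<in> space (trace_space E lam l).
         alg_cost V (\<lambda>i x. infection_time V E (\<omega> i) (src i) x) l u v > ereal (1 / lam)}"
      using measure_alg_cost_gt_inv_rate_ge[of V E lam l src u v] rate_le[of l] by auto
  qed (use c3 in auto)
qed

end
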